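(* Let $O$ be a closed orthant of $\mathbb{R}^d$ and let $K\subset O$ be an OU set about the origin with $0<\lambda(K)<\infty$. Then the uniform distribution $W_K$ is an extreme point of the class of OU distributions about the origin on $\mathbb{R}^d$.
   Context: A set $K\subset\mathbb{R}^d$ is OU about $x_0$ if for every $x\in K$ the closed axis-parallel rectangle with opposite vertices $x_0$ and $x$ lies in $K$. A distribution on $\mathbb{R}^d$ is OU about $x_0$ if it lies in the closed (weak topology) convex hull of the uniform distributions on subsets of $\mathbb{R}^d$ that are OU about $x_0$. $\lambda$ is Lebesgue measure. *)

theory Defs
  imports "HOL-Probability.Probability"
begin

definition rect :: "'a::euclidean_space \<Rightarrow> 'a \<Rightarrow> 'a set" where
  "rect a b = {y. \<forall>i\<in>Basis. min (a \<bullet> i) (b \<bullet> i) \<le> y \<bullet> i \<and> y \<bullet> i \<le> max (a \<bullet> i) (b \<bullet> i)}"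

definition OU_set :: "'a::euclidean_space \<Rightarrow> 'a set \<Rightarrow> bool" where
  "OU_set x0 K \<longleftrightarrow> (\<forall>x\<in>K. rect x0 x \<subseteq> K)"

definition closed_orthant :: "'a::euclidean_space set \<Rightarrow> bool" where
  "closed_orthant Q \<longleftrightarrow> (\<exists>s::'a \<Rightarrow> real. (\<forall>i\<in>Basis. s i = 1 \<or> s i = -1) \<and>
      Q = {x. \<forall>i\<in>Basis. 0 \<le> s i * (x \<bullet> i)})"

definition distr_on :: "'a::euclidean_space measure \<Rightarrow> bool" where
  "distr_on \<mu> \<longleftrightarrow> prob_space \<mu> \<and> sets \<mu> = sets borel"

definition unif :: "'a::euclidean_space set \<Rightarrow> 'a measure" where
  "unif K = measure_of UNIV (sets borel)
      (\<lambda>A. emeasure lebesgue (A \<inter> K) / emeasure lebesgue K)"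

definition mixture :: "nat \<Rightarrow> (nat \<Rightarrow> real) \<Rightarrow> (nat \<Rightarrow> 'a::euclidean_space measure) \<Rightarrow> 'a measure" where
  "mixture n c m = measure_of UNIV (sets borel)
      (\<lambda>A. \<Sum>j<n. ennreal (c j) * emeasure (m j) A)"

definition conv_hull_meas :: "'a::euclidean_space measure set \<Rightarrow> 'a measure set" where
  "conv_hull_meas S = {mixture n c m | n c m. n > 0 \<and> (\<forall>j<n. c j \<ge> 0 \<and> m j \<in> S)
      \<and> (\<Sum>j<n. c j) = 1}"

text \<open>Closure in the weak topology on Borel probability measures (the coarsest
  topology making all maps \<mu> \<mapsto> \<integral> f d\<mu>, f bounded continuous, continuous).\<close>
definition weak_closure :: "'a::euclidean_space measure set \<Rightarrow> 'a measure set" where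
  "weak_closure S = {\<mu>. distr_on \<mu> \<and>
      (\<forall>(F::('a \<Rightarrow> real) set) (e::real). finite F \<and> (\<forall>f\<in>F. continuous_on UNIV f \<and> bounded (range f)) \<and> e > 0 \<longrightarrow>
        (\<exists>\<nu>\<in>S. \<forall>f\<in>F. \<bar>(\<integral>x. f x \<partial>\<nu>) - (\<integral>x. f x \<partial>\<mu>)\<bar> < e))}"

definition OU_dists :: "'a::euclidean_space \<Rightarrow> 'a measure set" where
  "OU_dists x0 = weak_closure (conv_hull_meas
      {unif K | K. OU_set x0 K \<and> K \<in> sets lebesgue \<and>
         0 < emeasure lebesgue K \<and> emeasure lebesgue K < \<infinity>})"

definition extreme_meas :: "'a::euclidean_space measure set \<Rightarrow> 'a measure \<Rightarrow> bool" where
  "extreme_meas C \<mu> \<longleftrightarrow> \<mu> \<in> C \<and>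
     (\<forall>\<nu>1 \<nu>2 t. \<nu>1 \<in> C \<and> \<nu>2 \<in> C \<and> 0 < t \<and> t < 1 \<and>
        \<mu> = mixture 2 (\<lambda>j. if j = 0 then t else 1 - t) (\<lambda>j. if j = 0 then \<nu>1 else \<nu>2)
        \<longrightarrow> \<nu>1 = \<mu> \<and> \<nu>2 = \<mu>)"

end

theory Submission
  imports Defs
begin

text \<open>Every OU distribution about \<open>0\<close> is shift-decreasing on each orthant: for a bounded
  continuous \<open>g \<ge> 0\<close> vanishing outside the open orthant and an outward vector \<open>v\<close>,
  \<open>\<integral> g(x - v) d\<mu> \<le> \<integral> g d\<mu>\<close>. This holds for uniform distributions on OU sets (by translation
  invariance of Lebesgue measure) and survives mixtures and weak limits.

  Now let \<open>W\<^sub>K = t \<nu>\<^sub>1 + (1 - t) \<nu>\<^sub>2\<close> with OU distributions \<open>\<nu>\<^sub>i\<close>. A cell is the open box spanned by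
  \<open>0\<close> and a point of \<open>K\<close> in the open orthant; it lies in \<open>K\<close>. Outward shifts of sets inside a cell do
  not change their \<open>W\<^sub>K\<close>-measure, so, both \<open>\<nu>\<^sub>i\<close> being shift-decreasing, they do not change their
  \<open>\<nu>\<^sub>i\<close>-measure either. Hence on every cell \<open>\<nu>\<^sub>i\<close> is translation invariant for boxes, i.e. a
  multiple of Lebesgue measure (Cauchy's functional equation, coordinate by coordinate). Overlapping
  cells give the same multiple, and the cells cover \<open>K\<close> up to a null set: the points they miss form
  a set disjoint from its own translates along the diagonal of the orthant. Comparing masses,
  both multiples equal \<open>1 / \<lambda>(K)\<close>, so \<open>\<nu>\<^sub>1 = \<nu>\<^sub>2 = W\<^sub>K\<close>.\<close>

section \<open>Uniform distributions and finite mixtures\<close>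

lemma sets_unif [simp]: "sets (unif K) = sets borel"
  unfolding unif_def by (metis sets.sets_measure_of_eq space_borel)

lemma space_unif [simp]: "space (unif K) = UNIV"
  unfolding unif_def by (metis space_measure_of_conv)

lemma emeasure_unif:
  fixes K :: "'a::euclidean_space set"
  assumes K: "K \<in> sets lebesgue" and A: "A \<in> sets borel"
  shows "emeasure (unif K) A = emeasure lebesgue (A \<inter> K) / emeasure lebesgue K"
  unfolding unif_def
proof (rule emeasure_measure_of_sigma)
  show "countably_additive (sets borel) (\<lambda>A. emeasure lebesgue (A \<inter> K) / emeasure lebesgue K)"
  proof (rule countably_additiveI)
    fix A :: "nat \<Rightarrow> 'a set" assume A: "range A \<subseteq> sets borel" "disjoint_family A"
    have "(\<Sum>i. emeasure lebesgue (A i \<inter> K)) = emeasure lebesgue (\<Union>i. A i \<inter> K)"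
      using A K by (intro suminf_emeasure) (auto simp: disjoint_family_on_def)
    then show "(\<Sum>i. emeasure lebesgue (A i \<inter> K) / emeasure lebesgue K) =
        emeasure lebesgue (\<Union> (range A) \<inter> K) / emeasure lebesgue K"
      by (simp add: divide_ennreal_def)
  qed
qed (use A sets.sigma_algebra_axioms[of borel] in \<open>auto simp: positive_def\<close>)

lemma prob_space_unif:
  assumes "K \<in> sets lebesgue" "0 < emeasure lebesgue K" "emeasure lebesgue K < \<infinity>"
  shows "prob_space (unif K)"
proof
  show "emeasure (unif K) (space (unif K)) = 1"
    using emeasure_unif[OF assms(1), of UNIV] assms by (simp add: divide_eq_1_ennreal)
qed

lemma measure_unif:
  fixes K :: "'a::euclidean_space set"
  assumes K: "K \<in> sets lebesgue" "0 < emeasure lebesgue K" "emeasure lebesgue K < \<infinity>"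
    and A: "A \<in> sets borel"
  shows "measure (unif K) A = measure lebesgue (A \<inter> K) / measure lebesgue K"
proof -
  have "emeasure lebesgue (A \<inter> K) \<le> emeasure lebesgue K"
    using A K by (intro emeasure_mono) auto
  then have "emeasure lebesgue (A \<inter> K) = ennreal (measure lebesgue (A \<inter> K))"
    using K by (intro emeasure_eq_ennreal_measure) (auto simp: top_unique)
  moreover have "emeasure lebesgue K = ennreal (measure lebesgue K)"
    using K by (simp add: emeasure_eq_ennreal_measure less_top)
  ultimately have "emeasure (unif K) A = ennreal (measure lebesgue (A \<inter> K) / measure lebesgue K)"
    using emeasure_unif[OF K(1) A] K(2) by (simp add: divide_ennreal)
  then show ?thesis
    by (intro measure_eq_emeasure_eq_ennreal) auto
qed

lemma nn_integral_unif:
  fixes K :: "'a::euclidean_space set"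
  assumes K: "K \<in> sets lebesgue" and f: "f \<in> borel_measurable borel"
  shows "(\<integral>\<^sup>+x. f x \<partial>unif K) = inverse (emeasure lebesgue K) * (\<integral>\<^sup>+x. indicator K x * f x \<partial>lebesgue)"
proof -
  let ?c = "inverse (emeasure lebesgue K)"
  let ?M = "density lebesgue (\<lambda>x. ?c * indicator K x)"
  have "(\<integral>\<^sup>+x. f x \<partial>unif K) = (\<integral>\<^sup>+x. f x \<partial>?M)"
  proof (rule nn_integral_subalgebra)
    fix A assume "A \<in> sets (unif K)"
    then have A: "A \<in> sets borel" by simp
    have "emeasure ?M A = (\<integral>\<^sup>+x. ?c * indicator K x * indicator A x \<partial>lebesgue)"
      using A K by (intro emeasure_density) auto
    also have "\<dots> = (\<integral>\<^sup>+x. ?c * indicator (A \<inter> K) x \<partial>lebesgue)"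
      by (intro nn_integral_cong) (auto split: split_indicator)
    also have "\<dots> = ?c * emeasure lebesgue (A \<inter> K)"
      using A K by (intro nn_integral_cmult_indicator sets.Int) auto
    finally show "emeasure (unif K) A = emeasure ?M A"
      using emeasure_unif[OF K A] by (simp add: divide_ennreal_def mult.commute)
  qed (use f in \<open>auto simp: measurable_def\<close>)
  also have "\<dots> = (\<integral>\<^sup>+x. ?c * (indicator K x * f x) \<partial>lebesgue)"
    using K f by (subst nn_integral_density) (auto simp: measurable_completion mult.assoc)
  also have "\<dots> = ?c * (\<integral>\<^sup>+x. indicator K x * f x \<partial>lebesgue)"
  proof (rule nn_integral_cmult)
    have "f \<in> borel_measurable lebesgue"
      using f by (simp add: measurable_completion)
    then show "(\<lambda>x. indicator K x * f x) \<in> borel_measurable lebesgue"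
      by (rule borel_measurable_times_ennreal[OF borel_measurable_indicator[OF K]])
  qed
  finally show ?thesis .
qed

lemma sets_mixture [simp]: "sets (mixture n c m) = sets borel"
  unfolding mixture_def by (metis sets.sets_measure_of_eq space_borel)

lemma space_mixture [simp]: "space (mixture n c m) = UNIV"
  unfolding mixture_def by (metis space_measure_of_conv)

lemma emeasure_mixture:
  assumes m: "\<And>j. j < n \<Longrightarrow> sets (m j) = sets borel" and A: "A \<in> sets borel"
  shows "emeasure (mixture n c m) A = (\<Sum>j<n. ennreal (c j) * emeasure (m j) A)"
  unfolding mixture_def
proof (rule emeasure_measure_of_sigma)
  show "countably_additive (sets borel) (\<lambda>A. \<Sum>j<n. ennreal (c j) * emeasure (m j) A)"
  proof (rule countably_additiveI)
    fix A :: "nat \<Rightarrow> 'a set" assume A: "range A \<subseteq> sets borel" "disjoint_family A"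
    have "(\<Sum>i. \<Sum>j<n. ennreal (c j) * emeasure (m j) (A i)) = (\<Sum>j<n. \<Sum>i. ennreal (c j) * emeasure (m j) (A i))"
      by (rule suminf_sum) simp
    also have "\<dots> = (\<Sum>j<n. ennreal (c j) * emeasure (m j) (\<Union>i. A i))"
      using A m by (intro sum.cong refl) (simp add: suminf_emeasure)
    finally show "(\<Sum>i. \<Sum>j<n. ennreal (c j) * emeasure (m j) (A i)) =
        (\<Sum>j<n. ennreal (c j) * emeasure (m j) (\<Union> (range A)))" .
  qed
qed (use A sets.sigma_algebra_axioms[of borel] in \<open>auto simp: positive_def\<close>)

lemma nn_integral_mixture:
  assumes m: "\<And>j. j < n \<Longrightarrow> sets (m j) = sets borel" and f: "f \<in> borel_measurable borel"
  shows "(\<integral>\<^sup>+x. f x \<partial>mixture n c m) = (\<Sum>j<n. ennreal (c j) * (\<integral>\<^sup>+x. f x \<partial>m j))"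
  using f
proof (induct rule: borel_measurable_induct)
  case (cong f g)
  then show ?case by (simp add: fun_eq_iff)
next
  case (set A)
  then show ?case using m by (simp add: emeasure_mixture)
next
  case (mult u a)
  have "\<And>j. j < n \<Longrightarrow> (\<integral>\<^sup>+x. a * u x \<partial>m j) = a * (\<integral>\<^sup>+x. u x \<partial>m j)"
    using mult m by (intro nn_integral_cmult) (simp add: measurable_def)
  then have "(\<Sum>j<n. ennreal (c j) * (\<integral>\<^sup>+x. a * u x \<partial>m j)) = a * (\<Sum>j<n. ennreal (c j) * (\<integral>\<^sup>+x. u x \<partial>m j))"
    by (simp add: sum_distrib_left mult.left_commute)
  with mult show ?case
    by (simp add: nn_integral_cmult measurable_def)
next
  case (add u v)
  have "\<And>j. j < n \<Longrightarrow> (\<integral>\<^sup>+x. v x + u x \<partial>m j) = (\<integral>\<^sup>+x. v x \<partial>m j) + (\<integral>\<^sup>+x. u x \<partial>m j)"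
    using add m by (intro nn_integral_add) (simp_all add: measurable_def)
  then have "(\<Sum>j<n. ennreal (c j) * (\<integral>\<^sup>+x. v x + u x \<partial>m j)) =
      (\<Sum>j<n. ennreal (c j) * (\<integral>\<^sup>+x. v x \<partial>m j)) + (\<Sum>j<n. ennreal (c j) * (\<integral>\<^sup>+x. u x \<partial>m j))"
    by (simp add: distrib_left sum.distrib)
  with add show ?case
    by (simp add: nn_integral_add measurable_def)
next
  case (seq U)
  have "(\<integral>\<^sup>+x. (\<Squnion>i. U i x) \<partial>mixture n c m) = (\<Squnion>i. \<Sum>j<n. ennreal (c j) * (\<integral>\<^sup>+x. U i x \<partial>m j))"
    using seq by (subst nn_integral_monotone_convergence_SUP) (simp_all add: measurable_def)
  also have "\<dots> = (\<Sum>j<n. \<Squnion>i. ennreal (c j) * (\<integral>\<^sup>+x. U i x \<partial>m j))"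
    using seq(4) by (intro ennreal_SUP_sum)
      (auto simp: incseq_def intro!: mult_left_mono nn_integral_mono dest: le_funD)
  also have "\<dots> = (\<Sum>j<n. ennreal (c j) * (\<integral>\<^sup>+x. (\<Squnion>i. U i x) \<partial>m j))"
    using seq m by (simp add: SUP_mult_left_ennreal nn_integral_monotone_convergence_SUP measurable_def)
  finally show ?case
    by (simp add: image_comp fun_eq_iff)
qed

lemma prob_space_mixture:
  assumes m: "\<And>j. j < n \<Longrightarrow> prob_space (m j) \<and> sets (m j) = sets borel"
    and c: "\<And>j. j < n \<Longrightarrow> 0 \<le> c j" "(\<Sum>j<n. c j) = 1"
  shows "prob_space (mixture n c m)"
proof
  have "emeasure (mixture n c m) UNIV = (\<Sum>j<n. ennreal (c j) * emeasure (m j) (space (m j)))"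
    using m by (subst emeasure_mixture) (auto intro!: sum.cong simp: sets_eq_imp_space_eq[of _ borel])
  also have "\<dots> = (\<Sum>j<n. ennreal (c j))"
    using m by (simp add: prob_space.emeasure_space_1)
  also have "\<dots> = ennreal (\<Sum>j<n. c j)"
    using c by (subst sum_ennreal) auto
  finally show "emeasure (mixture n c m) (space (mixture n c m)) = 1"
    using c by simp
qed

lemma mixture_1_self:
  assumes "sets M = sets borel"
  shows "mixture 1 (\<lambda>_. 1) (\<lambda>_. M) = M"
  by (rule measure_eqI) (use assms in \<open>simp_all add: emeasure_mixture\<close>)

lemma emeasure_mixture_2:
  assumes "sets M1 = sets borel" "sets M2 = sets borel" "A \<in> sets borel"
  shows "emeasure (mixture 2 (\<lambda>j. if j = 0 then t else 1 - t) (\<lambda>j. if j = 0 then M1 else M2)) A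
      = ennreal t * emeasure M1 A + ennreal (1 - t) * emeasure M2 A"
  using assms by (subst emeasure_mixture) (auto simp: numeral_2_eq_2)

section \<open>Outward shifts inside an orthant\<close>

definition open_orthant :: "('a::euclidean_space \<Rightarrow> real) \<Rightarrow> 'a set" where
  "open_orthant s = {x. \<forall>i\<in>Basis. 0 < s i * (x \<bullet> i)}"

definition outward :: "('a::euclidean_space \<Rightarrow> real) \<Rightarrow> 'a \<Rightarrow> bool" where
  "outward s v \<longleftrightarrow> (\<forall>i\<in>Basis. 0 \<le> s i * (v \<bullet> i))"

definition orthant_test_fun :: "('a::euclidean_space \<Rightarrow> real) \<Rightarrow> ('a \<Rightarrow> real) \<Rightarrow> bool" where
  "orthant_test_fun s g \<longleftrightarrow> continuous_on UNIV g \<and> bounded (range g) \<and> (\<forall>x. 0 \<le> g x) \<and>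
     (\<forall>x. x \<notin> open_orthant s \<longrightarrow> g x = 0)"

text \<open>Since an OU set containing \<open>v + y\<close> also contains \<open>y\<close>, shifting an OU distribution by
  an outward vector cannot increase the mass it puts on any part of the open orthant.\<close>

definition shift_decreasing_nn :: "('a::euclidean_space \<Rightarrow> real) \<Rightarrow> 'a measure \<Rightarrow> bool" where
  "shift_decreasing_nn s \<nu> \<longleftrightarrow> (\<forall>g v. orthant_test_fun s g \<and> outward s v \<longrightarrow>
     (\<integral>\<^sup>+x. ennreal (g (x - v)) \<partial>\<nu>) \<le> (\<integral>\<^sup>+x. ennreal (g x) \<partial>\<nu>))"

definition shift_decreasing :: "('a::euclidean_space \<Rightarrow> real) \<Rightarrow> 'a measure \<Rightarrow> bool" where
  "shift_decreasing s \<nu> \<longleftrightarrow> (\<forall>g v. orthant_test_fun s g \<and> outward s v \<longrightarrow>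
     (\<integral>x. g (x - v) \<partial>\<nu>) \<le> (\<integral>x. g x \<partial>\<nu>))"

lemma zero_notin_open_orthant: "(0::'a::euclidean_space) \<notin> open_orthant s"
  using nonempty_Basis by (auto simp: open_orthant_def)

lemma open_open_orthant: "open (open_orthant s)"
proof -
  have "open_orthant s = (\<Inter>i\<in>Basis. {x. 0 < s i * (x \<bullet> i)})"
    by (auto simp: open_orthant_def)
  moreover have "open {x. 0 < s i * (x \<bullet> i)}" for i :: 'a
    by (intro open_Collect_less continuous_intros)
  ultimately show ?thesis
    by auto
qed

lemma OU_set_outward_shift:
  fixes K :: "'a::euclidean_space set"
  assumes "OU_set 0 K" "y \<in> open_orthant s" "outward s v" "v + y \<in> K"
  shows "y \<in> K"
proof -
  have "y \<in> rect 0 (v + y)"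
    unfolding rect_def
  proof safe
    fix i :: 'a assume i: "i \<in> Basis"
    have "0 < s i * (y \<bullet> i)" "0 \<le> s i * (v \<bullet> i)"
      using assms(2,3) i by (auto simp: open_orthant_def outward_def)
    then show "min (0 \<bullet> i) ((v + y) \<bullet> i) \<le> y \<bullet> i" "y \<bullet> i \<le> max (0 \<bullet> i) ((v + y) \<bullet> i)"
      by (auto simp: inner_add_left zero_less_mult_iff zero_le_mult_iff)
  qed
  then show ?thesis
    using assms(1,4) by (auto simp: OU_set_def)
qed

lemma orthant_test_fun_translate:
  assumes "orthant_test_fun s g"
  shows "continuous_on UNIV (\<lambda>x. g (x - v))" "bounded (range (\<lambda>x. g (x - v)))"
    "(\<lambda>x. g (x - v)) \<in> borel_measurable borel"
proof -
  show cont: "continuous_on UNIV (\<lambda>x. g (x - v))"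
    using assms unfolding orthant_test_fun_def
    by (intro continuous_on_compose2[of UNIV g UNIV "\<lambda>x. x - v"])
      (auto intro!: continuous_on_diff continuous_on_id continuous_on_const)
  have "range (\<lambda>x. g (x - v)) \<subseteq> range g" by auto
  then show "bounded (range (\<lambda>x. g (x - v)))"
    using assms bounded_subset unfolding orthant_test_fun_def by blast
  show "(\<lambda>x. g (x - v)) \<in> borel_measurable borel"
    using cont by (rule borel_measurable_continuous_onI)
qed

lemma orthant_test_fun_borel: "orthant_test_fun s g \<Longrightarrow> g \<in> borel_measurable borel"
  using orthant_test_fun_translate(3)[of s g 0] by simp

lemma orthant_test_fun_bounded: "orthant_test_fun s g \<Longrightarrow> \<exists>B. \<forall>x. 0 \<le> g x \<and> g x \<le> B"
  unfolding orthant_test_fun_def bounded_iff by (metis abs_le_D1 real_norm_def rangeI)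

lemma nn_integral_lebesgue_translate:
  fixes v :: "'a::euclidean_space"
  assumes h: "h \<in> borel_measurable lebesgue"
  shows "(\<integral>\<^sup>+x. h x \<partial>lebesgue) = (\<integral>\<^sup>+x. h (v + x) \<partial>lebesgue)"
proof -
  have T: "(\<lambda>x. v + (\<Sum>j\<in>Basis. (1 * (x \<bullet> j)) *\<^sub>R j)) = (\<lambda>x. v + x)"
    by (simp add: euclidean_representation)
  have "lebesgue = distr lebesgue lebesgue (\<lambda>x. v + x)"
    using lebesgue_affine_euclidean[of "\<lambda>_. 1" v] unfolding T by (simp add: density_1)
  moreover have "(\<lambda>x. v + x) \<in> lebesgue \<rightarrow>\<^sub>M lebesgue"
    using lebesgue_affine_measurable[of "\<lambda>_. 1" v] unfolding T by simp
  ultimately show ?thesis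
    using h by (metis nn_integral_distr)
qed

lemma shift_decreasing_nn_unif:
  fixes K :: "'a::euclidean_space set"
  assumes K: "K \<in> sets lebesgue" and OU: "OU_set 0 K"
  shows "shift_decreasing_nn s (unif K)"
  unfolding shift_decreasing_nn_def
proof (intro allI impI, elim conjE)
  fix g v assume g: "orthant_test_fun s g" and v: "outward s v"
  have gm: "(\<lambda>x. ennreal (g x)) \<in> borel_measurable borel"
    using orthant_test_fun_borel[OF g] by measurable
  have gm': "(\<lambda>x. ennreal (g (x - v))) \<in> borel_measurable borel"
    using orthant_test_fun_translate(3)[OF g, of v] by measurable
  have "(\<integral>\<^sup>+x. indicator K x * ennreal (g (x - v)) \<partial>lebesgue) =
      (\<integral>\<^sup>+x. indicator K (v + x) * ennreal (g x) \<partial>lebesgue)"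
    using K gm' by (subst nn_integral_lebesgue_translate[of _ v])
      (auto intro!: borel_measurable_times_ennreal borel_measurable_indicator simp: measurable_completion)
  also have "\<dots> \<le> (\<integral>\<^sup>+x. indicator K x * ennreal (g x) \<partial>lebesgue)"
  proof (rule nn_integral_mono)
    fix x
    have "x \<in> K" if "x \<in> open_orthant s" "v + x \<in> K"
      using OU_set_outward_shift[OF OU that(1) v that(2)] .
    then show "indicator K (v + x) * ennreal (g x) \<le> indicator K x * ennreal (g x)"
      using g by (cases "x \<in> open_orthant s") (auto simp: orthant_test_fun_def split: split_indicator)
  qed
  finally show "(\<integral>\<^sup>+x. ennreal (g (x - v)) \<partial>unif K) \<le> (\<integral>\<^sup>+x. ennreal (g x) \<partial>unif K)"
    using nn_integral_unif[OF K gm] nn_integral_unif[OF K gm'] by (simp add: mult_left_mono)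
qed

lemma shift_decreasing_nn_mixture:
  assumes m: "\<And>j. j < n \<Longrightarrow> sets (m j) = sets borel \<and> shift_decreasing_nn s (m j)"
  shows "shift_decreasing_nn s (mixture n c m)"
  unfolding shift_decreasing_nn_def
proof (intro allI impI, elim conjE)
  fix g v assume g: "orthant_test_fun s g" and v: "outward s v"
  have gm: "(\<lambda>x. ennreal (g x)) \<in> borel_measurable borel"
    using orthant_test_fun_borel[OF g] by measurable
  have gm': "(\<lambda>x. ennreal (g (x - v))) \<in> borel_measurable borel"
    using orthant_test_fun_translate(3)[OF g, of v] by measurable
  have "(\<integral>\<^sup>+x. ennreal (g (x - v)) \<partial>mixture n c m) = (\<Sum>j<n. ennreal (c j) * (\<integral>\<^sup>+x. ennreal (g (x - v)) \<partial>m j))"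
    using m gm' by (intro nn_integral_mixture) auto
  also have "\<dots> \<le> (\<Sum>j<n. ennreal (c j) * (\<integral>\<^sup>+x. ennreal (g x) \<partial>m j))"
    using m g v by (intro sum_mono mult_left_mono) (auto simp: shift_decreasing_nn_def)
  also have "\<dots> = (\<integral>\<^sup>+x. ennreal (g x) \<partial>mixture n c m)"
    using m gm by (intro nn_integral_mixture[symmetric]) auto
  finally show "(\<integral>\<^sup>+x. ennreal (g (x - v)) \<partial>mixture n c m) \<le> (\<integral>\<^sup>+x. ennreal (g x) \<partial>mixture n c m)" .
qed

lemma shift_decreasing_of_nn:
  assumes P: "prob_space \<nu>" "sets \<nu> = sets borel" and N: "shift_decreasing_nn s \<nu>"
  shows "shift_decreasing s \<nu>"
  unfolding shift_decreasing_def
proof (intro allI impI, elim conjE)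
  fix g v assume g: "orthant_test_fun s g" and v: "outward s v"
  interpret prob_space \<nu> by (rule P(1))
  obtain B where B: "\<And>x. 0 \<le> g x \<and> g x \<le> B"
    using orthant_test_fun_bounded[OF g] by blast
  have gm: "g \<in> borel_measurable \<nu>" and gm': "(\<lambda>x. g (x - v)) \<in> borel_measurable \<nu>"
    using orthant_test_fun_borel[OF g] orthant_test_fun_translate(3)[OF g, of v] P(2)
    by (simp_all add: measurable_def)
  have "(\<integral>\<^sup>+x. ennreal (g x) \<partial>\<nu>) \<le> (\<integral>\<^sup>+x. ennreal B \<partial>\<nu>)"
    using B by (intro nn_integral_mono) (auto intro: ennreal_leI)
  then have fin: "(\<integral>\<^sup>+x. ennreal (g x) \<partial>\<nu>) < \<infinity>"
    by (simp add: emeasure_space_1 le_less_trans)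
  have "(\<integral>x. g (x - v) \<partial>\<nu>) = enn2real (\<integral>\<^sup>+x. ennreal (g (x - v)) \<partial>\<nu>)"
    using gm' B by (intro integral_eq_nn_integral) auto
  also have "\<dots> \<le> enn2real (\<integral>\<^sup>+x. ennreal (g x) \<partial>\<nu>)"
    using N g v fin by (intro enn2real_mono) (auto simp: shift_decreasing_nn_def)
  also have "\<dots> = (\<integral>x. g x \<partial>\<nu>)"
    using gm B by (intro integral_eq_nn_integral[symmetric]) auto
  finally show "(\<integral>x. g (x - v) \<partial>\<nu>) \<le> (\<integral>x. g x \<partial>\<nu>)" .
qed

lemma shift_decreasing_weak_closure:
  assumes S: "\<And>\<nu>. \<nu> \<in> S \<Longrightarrow> shift_decreasing s \<nu>" and \<mu>: "\<mu> \<in> weak_closure S"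
  shows "shift_decreasing s \<mu>"
  unfolding shift_decreasing_def
proof (intro allI impI, elim conjE)
  fix g v assume g: "orthant_test_fun s g" and v: "outward s v"
  let ?g' = "\<lambda>x. g (x - v)"
  show "(\<integral>x. ?g' x \<partial>\<mu>) \<le> (\<integral>x. g x \<partial>\<mu>)"
  proof (rule ccontr)
    define e where "e = ((\<integral>x. ?g' x \<partial>\<mu>) - (\<integral>x. g x \<partial>\<mu>)) / 2"
    assume "\<not> ?thesis"
    then have "0 < e" by (simp add: e_def)
    moreover have "\<forall>f\<in>{g, ?g'}. continuous_on UNIV f \<and> bounded (range f)"
      using g orthant_test_fun_translate[OF g, of v] unfolding orthant_test_fun_def by blast
    ultimately obtain \<nu> where "\<nu> \<in> S" and close: "\<forall>f\<in>{g, ?g'}. \<bar>(\<integral>x. f x \<partial>\<nu>) - (\<integral>x. f x \<partial>\<mu>)\<bar> < e"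
      using \<mu>[unfolded weak_closure_def mem_Collect_eq, THEN conjunct2, rule_format, of "{g, ?g'}" e]
      by blast
    have "(\<integral>x. ?g' x \<partial>\<nu>) \<le> (\<integral>x. g x \<partial>\<nu>)"
      using S[OF \<open>\<nu> \<in> S\<close>] g v by (auto simp: shift_decreasing_def)
    moreover have "(\<integral>x. g x \<partial>\<nu>) < (\<integral>x. g x \<partial>\<mu>) + e" "(\<integral>x. ?g' x \<partial>\<mu>) - e < (\<integral>x. ?g' x \<partial>\<nu>)"
      using close by (auto simp: abs_less_iff)
    ultimately show False
      unfolding e_def by argo
  qed
qed

definition OU_unifs :: "'a::euclidean_space measure set" where
  "OU_unifs = {unif K | K. OU_set 0 K \<and> K \<in> sets lebesgue \<and>
     0 < emeasure lebesgue K \<and> emeasure lebesgue K < \<infinity>}"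

lemma OU_dists_0_eq: "OU_dists 0 = weak_closure (conv_hull_meas OU_unifs)"
  unfolding OU_dists_def OU_unifs_def by simp

lemma conv_hull_OU_unifs:
  assumes "\<nu> \<in> conv_hull_meas OU_unifs"
  shows "prob_space \<nu>" "sets \<nu> = sets borel" "shift_decreasing s \<nu>"
proof -
  obtain n c m where \<nu>: "\<nu> = mixture n c m" and cm: "\<And>j. j < n \<Longrightarrow> c j \<ge> 0 \<and> m j \<in> OU_unifs"
    and c1: "(\<Sum>j<n. c j) = 1"
    using assms unfolding conv_hull_meas_def by blast
  have m: "prob_space (m j) \<and> sets (m j) = sets borel \<and> shift_decreasing_nn s (m j)" if j: "j < n" for j
  proof -
    obtain K where "m j = unif K" "OU_set 0 K" "K \<in> sets lebesgue"
      "0 < emeasure lebesgue K" "emeasure lebesgue K < \<infinity>"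
      using cm[OF j] unfolding OU_unifs_def by blast
    then show ?thesis
      using prob_space_unif shift_decreasing_nn_unif by (metis sets_unif)
  qed
  show P: "prob_space \<nu>"
    unfolding \<nu> using m cm c1 by (intro prob_space_mixture) auto
  show S: "sets \<nu> = sets borel"
    unfolding \<nu> by simp
  have "shift_decreasing_nn s \<nu>"
    unfolding \<nu> using m by (intro shift_decreasing_nn_mixture) auto
  with P S show "shift_decreasing s \<nu>"
    by (rule shift_decreasing_of_nn)
qed

lemma OU_dists_shift_decreasing:
  assumes "\<mu> \<in> OU_dists 0"
  shows "prob_space \<mu>" "sets \<mu> = sets borel" "shift_decreasing s \<mu>"
proof -
  have \<mu>: "\<mu> \<in> weak_closure (conv_hull_meas OU_unifs)"
    using assms by (simp add: OU_dists_0_eq)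
  then show "prob_space \<mu>" "sets \<mu> = sets borel"
    by (simp_all add: weak_closure_def distr_on_def)
  show "shift_decreasing s \<mu>"
    using conv_hull_OU_unifs(3) \<mu> by (rule shift_decreasing_weak_closure)
qed

lemma unif_in_OU_dists:
  fixes K :: "'a::euclidean_space set"
  assumes "OU_set 0 K" "K \<in> sets lebesgue" "0 < emeasure lebesgue K" "emeasure lebesgue K < \<infinity>"
  shows "unif K \<in> OU_dists 0"
proof -
  have "unif K \<in> OU_unifs"
    using assms unfolding OU_unifs_def by blast
  then have "mixture 1 (\<lambda>_. 1) (\<lambda>_. unif K) \<in> conv_hull_meas OU_unifs"
    unfolding conv_hull_meas_def by force
  moreover have "mixture 1 (\<lambda>_. 1) (\<lambda>_. unif K) = unif K"
    by (rule mixture_1_self) simp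
  ultimately show ?thesis
    using prob_space_unif[OF assms(2-4)]
    unfolding OU_dists_0_eq weak_closure_def distr_on_def by (auto intro!: bexI[of _ "unif K"])
qed

lemma orthant_test_funs_tendsto_indicator:
  fixes B :: "'a::euclidean_space set"
  assumes B: "open B" "B \<subseteq> open_orthant s"
  obtains g where "\<And>n. orthant_test_fun s (g n)" "\<And>n x. g n x \<le> 1"
    "\<And>x. (\<lambda>n. g n x) \<longlonglongrightarrow> indicator B x"
proof
  define g where "g n x = min 1 (real n * infdist x (- B))" for n :: nat and x
  show le1: "g n x \<le> 1" for n x
    by (simp add: g_def)
  show "orthant_test_fun s (g n)" for n
    unfolding orthant_test_fun_def
  proof (intro conjI allI impI)
    show "continuous_on UNIV (g n)"
      unfolding g_def by (intro continuous_intros)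
    show nonneg: "0 \<le> g n x" for x
      by (simp add: g_def infdist_nonneg)
    show "bounded (range (g n))"
      unfolding bounded_iff using le1 nonneg by (intro exI[of _ 1]) auto
    show "g n x = 0" if "x \<notin> open_orthant s" for x
    proof -
      have "x \<in> - B"
        using that B by auto
      then show ?thesis
        by (simp add: g_def)
    qed
  qed
  show "(\<lambda>n. g n x) \<longlonglongrightarrow> indicator B x" for x
  proof (cases "x \<in> B")
    case True
    have "- B \<noteq> {}"
      using B zero_notin_open_orthant[of s] by auto
    then have d: "0 < infdist x (- B)"
      using True B(1) by (simp add: infdist_pos_not_in_closed closed_Compl)
    obtain N :: nat where N: "1 / infdist x (- B) < real N"
      using reals_Archimedean2 by blast
    have "g n x = 1" if "N \<le> n" for n
    proof -
      have "1 / infdist x (- B) < real n"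
        using N that by (meson less_le_trans of_nat_le_iff)
      then show ?thesis
        using d by (simp add: g_def field_simps)
    qed
    then have "eventually (\<lambda>n. g n x = 1) sequentially"
      by (rule eventually_sequentiallyI)
    then show ?thesis
      using True by (simp add: tendsto_eventually)
  qed (simp add: g_def)
qed

lemma measure_outward_translate_le:
  fixes B :: "'a::euclidean_space set"
  assumes P: "prob_space \<nu>" "sets \<nu> = sets borel" "shift_decreasing s \<nu>"
    and B: "open B" "B \<subseteq> open_orthant s" and v: "outward s v"
  shows "measure \<nu> ((+) v ` B) \<le> measure \<nu> B"
proof -
  interpret prob_space \<nu> by (rule P(1))
  obtain g where g: "\<And>n. orthant_test_fun s (g n)" "\<And>n x. g n x \<le> 1"
    and lim: "\<And>x. (\<lambda>n. g n x) \<longlonglongrightarrow> indicator B x"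
    using orthant_test_funs_tendsto_indicator[OF B] by blast
  have g0: "0 \<le> g n x" for n x
    using g(1) by (simp add: orthant_test_fun_def)
  have Bv: "(+) v ` B \<in> sets \<nu>" "B \<in> sets \<nu>"
    using B P(2) open_translation[OF B(1)] by auto
  have "indicator B (x - v) = (indicator ((+) v ` B) x :: real)" for x
    by (auto simp: indicator_def image_iff)
  then have lim': "(\<lambda>n. g n (x - v)) \<longlonglongrightarrow> indicator ((+) v ` B) x" for x
    using lim[of "x - v"] by simp
  have "(\<lambda>n. \<integral>x. g n (x - v) \<partial>\<nu>) \<longlonglongrightarrow> (\<integral>x. indicator ((+) v ` B) x \<partial>\<nu>)"
    using orthant_test_fun_translate(3)[OF g(1)] P(2) Bv lim' g(2) g0
    by (intro integral_dominated_convergence[where w="\<lambda>_. 1"]) (auto simp: measurable_def)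
  moreover have "(\<lambda>n. \<integral>x. g n x \<partial>\<nu>) \<longlonglongrightarrow> (\<integral>x. indicator B x \<partial>\<nu>)"
    using orthant_test_fun_borel[OF g(1)] P(2) Bv lim g(2) g0
    by (intro integral_dominated_convergence[where w="\<lambda>_. 1"]) (auto simp: measurable_def)
  ultimately have "(\<integral>x. indicator ((+) v ` B) x \<partial>\<nu>) \<le> (\<integral>x. (indicator B x :: real) \<partial>\<nu>)"
    by (rule LIMSEQ_le) (use P(3) g(1) v in \<open>auto simp: shift_decreasing_def\<close>)
  then show ?thesis
    using Bv by simp
qed

section \<open>Measures invariant under translations of boxes\<close>

context
  fixes \<phi> :: "real \<Rightarrow> real" and L :: real
  assumes L: "0 < L" and nonneg: "\<And>x. 0 < x \<Longrightarrow> x \<le> L \<Longrightarrow> 0 \<le> \<phi> x"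
    and add: "\<And>x y. 0 < x \<Longrightarrow> 0 < y \<Longrightarrow> x + y \<le> L \<Longrightarrow> \<phi> (x + y) = \<phi> x + \<phi> y"
begin

lemma additive_nonneg_on_interval_mono:
  assumes "0 < a" "a \<le> b" "b \<le> L"
  shows "\<phi> a \<le> \<phi> b"
proof (cases "a = b")
  case False
  then show ?thesis
    using add[of a "b - a"] nonneg[of "b - a"] assms by simp
qed simp

lemma additive_on_interval_mult_nat:
  fixes k :: nat
  assumes "0 < h" "1 \<le> k" "real k * h \<le> L"
  shows "\<phi> (real k * h) = real k * \<phi> h"
  using assms
proof (induction k)
  case (Suc k)
  show ?case
  proof (cases "k = 0")
    case False
    have "\<phi> (real k * h + h) = \<phi> (real k * h) + \<phi> h"
      using Suc.prems False by (intro add) (simp_all add: algebra_simps)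
    then show ?thesis
      using Suc False by (simp add: algebra_simps)
  qed simp
qed simp

lemma additive_nonneg_on_interval_grid_bounds:
  assumes x: "0 < x" "x \<le> L" and n: "1 \<le> n" and k: "k \<le> n"
    and kL: "real k * (L / real n) \<le> x" "x < (real k + 1) * (L / real n)"
  shows "real k * (\<phi> L / real n) \<le> \<phi> x" "\<phi> x \<le> (real k + 1) * (\<phi> L / real n)"
proof -
  define h where "h = L / real n"
  have h: "0 < h" "real n * h = L"
    using L n by (simp_all add: h_def)
  have kx: "real k * h \<le> x" "x < (real k + 1) * h"
    using kL by (simp_all add: h_def)
  have \<phi>L: "0 \<le> \<phi> L"
    using nonneg L by simp
  have unit: "\<phi> h = \<phi> L / real n"
    using additive_on_interval_mult_nat[of h n] h n by (simp add: field_simps)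
  show "real k * (\<phi> L / real n) \<le> \<phi> x"
  proof (cases "k = 0")
    case False
    then have "\<phi> (real k * h) \<le> \<phi> x"
      using kx x h by (intro additive_nonneg_on_interval_mono) auto
    then show ?thesis
      using additive_on_interval_mult_nat[of h k] kx x h False unit by simp
  qed (use nonneg x in simp)
  show "\<phi> x \<le> (real k + 1) * (\<phi> L / real n)"
  proof (cases "Suc k \<le> n")
    case True
    then have "real (Suc k) * h \<le> real n * h"
      using h by (intro mult_right_mono) auto
    then have "real (Suc k) * h \<le> L"
      using h by simp
    moreover have "\<phi> x \<le> \<phi> (real (Suc k) * h)"
      using kx x h calculation by (intro additive_nonneg_on_interval_mono) (auto simp: algebra_simps)
    ultimately show ?thesis
      using additive_on_interval_mult_nat[of h "Suc k"] h unit by (simp add: add.commute)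
  next
    case False
    then have "k = n"
      using k by simp
    then have "\<phi> L \<le> (real k + 1) * (\<phi> L / real n)"
      using n \<phi>L by (simp add: field_simps)
    moreover have "\<phi> x \<le> \<phi> L"
      using x by (intro additive_nonneg_on_interval_mono) auto
    ultimately show ?thesis
      by linarith
  qed
qed

lemma additive_nonneg_on_interval_approx:
  assumes x: "0 < x" "x \<le> L" and n: "1 \<le> n"
  shows "\<bar>\<phi> x - x / L * \<phi> L\<bar> \<le> \<phi> L / real n"
proof -
  define k where "k = nat \<lfloor>x / (L / real n)\<rfloor>"
  have h: "0 < L / real n"
    using L n by simp
  have "real k = of_int \<lfloor>x / (L / real n)\<rfloor>"
    using x h by (simp add: k_def)
  then have k: "real k \<le> x / (L / real n)" "x / (L / real n) < real k + 1"
    by linarith+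
  moreover have "x / (L / real n) \<le> real n"
    using x L n by (simp add: field_simps)
  ultimately have "real k \<le> real n"
    by linarith
  moreover have kx: "real k * (L / real n) \<le> x" "x < (real k + 1) * (L / real n)"
    using k L n by (simp_all add: field_simps)
  ultimately have bounds: "real k * (\<phi> L / real n) \<le> \<phi> x" "\<phi> x \<le> (real k + 1) * (\<phi> L / real n)"
    using additive_nonneg_on_interval_grid_bounds[OF x n] by simp_all
  have "real k / real n \<le> x / L" "x / L \<le> (real k + 1) / real n"
    using kx n L by (simp_all add: field_simps)
  then have "real k * (\<phi> L / real n) \<le> x / L * \<phi> L" "x / L * \<phi> L \<le> (real k + 1) * (\<phi> L / real n)"
    using mult_right_mono[of _ _ "\<phi> L"] nonneg[of L] L
    by (metis order.refl times_divide_eq_left times_divide_eq_right mult.commute)+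
  with bounds show ?thesis
    by (simp add: abs_le_iff algebra_simps add_divide_distrib)
qed

lemma additive_nonneg_on_interval_linear:
  assumes x: "0 < x" "x \<le> L"
  shows "\<phi> x = x / L * \<phi> L"
proof -
  have "\<bar>\<phi> x - x / L * \<phi> L\<bar> \<le> 0 + e" if e: "0 < e" for e
  proof -
    have \<phi>L: "0 \<le> \<phi> L"
      using nonneg L by simp
    obtain n :: nat where n: "\<phi> L / e < real n"
      using reals_Archimedean2 by blast
    then have "1 \<le> n"
      using \<phi>L e by (metis divide_nonneg_pos le_less_trans less_one not_le of_nat_0 of_nat_less_iff)
    moreover have "\<phi> L / real n < e"
      using n e \<open>1 \<le> n\<close> by (simp add: field_simps)
    ultimately show ?thesis
      using additive_nonneg_on_interval_approx[OF x] by fastforce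
  qed
  then show ?thesis
    using field_le_epsilon[of "\<bar>\<phi> x - x / L * \<phi> L\<bar>" 0] by simp
qed

end

definition set_coord :: "'a::euclidean_space \<Rightarrow> 'a \<Rightarrow> real \<Rightarrow> 'a" where
  "set_coord h i t = h + (t - h \<bullet> i) *\<^sub>R i"

lemma inner_set_coord:
  "i \<in> Basis \<Longrightarrow> j \<in> Basis \<Longrightarrow> set_coord h i t \<bullet> j = (if j = i then t else h \<bullet> j)"
  by (auto simp: set_coord_def inner_add_left inner_Basis)

lemma set_coord_set_coord [simp]: "i \<in> Basis \<Longrightarrow> set_coord (set_coord h i s) i t = set_coord h i t"
  by (rule euclidean_eqI) (simp add: inner_set_coord)

lemma set_coord_same [simp]: "i \<in> Basis \<Longrightarrow> set_coord h i (h \<bullet> i) = h"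
  by (rule euclidean_eqI) (simp add: inner_set_coord)

lemma box_subset_box_iff:
  fixes a b l r :: "'a::euclidean_space"
  assumes "\<forall>i\<in>Basis. a \<bullet> i < b \<bullet> i"
  shows "box a b \<subseteq> box l r \<longleftrightarrow> (\<forall>i\<in>Basis. l \<bullet> i \<le> a \<bullet> i \<and> b \<bullet> i \<le> r \<bullet> i)"
  using assms subset_box(4) by blast

lemma measure_box_split:
  fixes a b :: "'a::euclidean_space"
  assumes \<nu>: "finite_measure \<nu>" "sets \<nu> = sets borel" and null: "measure \<nu> {x. x \<bullet> i = c} = 0"
    and i: "i \<in> Basis" and c: "a \<bullet> i < c" "c < b \<bullet> i"
  shows "measure \<nu> (box a b) = measure \<nu> (box a (set_coord b i c)) + measure \<nu> (box (set_coord a i c) b)"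
proof -
  interpret finite_measure \<nu> by (rule \<nu>(1))
  define A1 where "A1 = box a (set_coord b i c)"
  define A2 where "A2 = box (set_coord a i c) b"
  define H where "H = {x. x \<bullet> i = c}"
  have mem: "x \<in> A1 \<longleftrightarrow> x \<in> box a b \<and> x \<bullet> i < c" "x \<in> A2 \<longleftrightarrow> x \<in> box a b \<and> c < x \<bullet> i" for x
  proof -
    have "x \<in> A1 \<longleftrightarrow> (\<forall>j\<in>Basis. a \<bullet> j < x \<bullet> j \<and> x \<bullet> j < b \<bullet> j) \<and> x \<bullet> i < c"
      "x \<in> A2 \<longleftrightarrow> (\<forall>j\<in>Basis. a \<bullet> j < x \<bullet> j \<and> x \<bullet> j < b \<bullet> j) \<and> c < x \<bullet> i"
      using i c by (auto simp: A1_def A2_def mem_box inner_set_coord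
          intro: less_trans dest: bspec[of _ _ i] split: if_splits)
    then show "x \<in> A1 \<longleftrightarrow> x \<in> box a b \<and> x \<bullet> i < c" "x \<in> A2 \<longleftrightarrow> x \<in> box a b \<and> c < x \<bullet> i"
      by (simp_all add: mem_box)
  qed
  then have disj: "A1 \<inter> A2 = {}" and sub: "A1 \<union> A2 \<subseteq> box a b" and cover: "box a b \<subseteq> (A1 \<union> A2) \<union> H"
    by (auto simp: H_def)
  have sets: "A1 \<in> sets \<nu>" "A2 \<in> sets \<nu>" "box a b \<in> sets \<nu>" "H \<in> sets \<nu>"
    using \<nu>(2) i by (auto simp: A1_def A2_def H_def)
  have "measure \<nu> (A1 \<union> A2) = measure \<nu> A1 + measure \<nu> A2"
    using disj sets by (intro finite_measure_Union)
  moreover have "measure \<nu> (A1 \<union> A2) \<le> measure \<nu> (box a b)"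
    using sub sets by (intro finite_measure_mono)
  moreover have "measure \<nu> (box a b) \<le> measure \<nu> ((A1 \<union> A2) \<union> H)"
    using cover sets by (intro finite_measure_mono) auto
  moreover have "measure \<nu> ((A1 \<union> A2) \<union> H) \<le> measure \<nu> (A1 \<union> A2) + measure \<nu> H"
    using sets by (intro measure_Un_le) auto
  ultimately have "measure \<nu> (box a b) = measure \<nu> A1 + measure \<nu> A2"
    using null unfolding H_def by linarith
  then show ?thesis
    by (simp add: A1_def A2_def)
qed

lemma emeasure_density_cmult_indicator:
  assumes "Y \<in> sets M" "R \<in> sets M"
  shows "emeasure (density M (\<lambda>x. c * indicator R x)) Y = c * emeasure M (Y \<inter> R)"
proof -
  have "emeasure (density M (\<lambda>x. c * indicator R x)) Y = (\<integral>\<^sup>+x. c * indicator (Y \<inter> R) x \<partial>M)"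
    using assms by (subst emeasure_density) (auto intro!: nn_integral_cong split: split_indicator)
  then show ?thesis
    using assms by (simp add: nn_integral_cmult_indicator)
qed

context
  fixes \<nu> :: "'a::euclidean_space measure" and l r :: 'a and \<alpha> :: real
  assumes \<nu>: "finite_measure \<nu>" "sets \<nu> = sets borel" and \<alpha>: "0 \<le> \<alpha>"
    and boxes: "\<And>a b. \<forall>i\<in>Basis. a \<bullet> i < b \<bullet> i \<Longrightarrow> box a b \<subseteq> box l r \<Longrightarrow>
       measure \<nu> (box a b) = \<alpha> * (\<Prod>i\<in>Basis. (b - a) \<bullet> i)"
begin

lemma emeasure_box_Int_box_eq_scaled_lborel:
  "emeasure \<nu> (box a b \<inter> box l r) = ennreal \<alpha> * emeasure lborel (box a b \<inter> box l r)"
proof -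
  interpret finite_measure \<nu> by (rule \<nu>(1))
  define c :: 'a where "c = (\<Sum>i\<in>Basis. max (a \<bullet> i) (l \<bullet> i) *\<^sub>R i)"
  define d :: 'a where "d = (\<Sum>i\<in>Basis. min (b \<bullet> i) (r \<bullet> i) *\<^sub>R i)"
  have cd: "box a b \<inter> box l r = box c d"
    unfolding c_def d_def by (rule box_Int_box)
  show ?thesis
  proof (cases "\<forall>i\<in>Basis. c \<bullet> i < d \<bullet> i")
    case True
    have "0 \<le> (\<Prod>i\<in>Basis. (d - c) \<bullet> i)"
      using True by (intro prod_nonneg) (auto simp: inner_simps)
    moreover have "emeasure lborel (box c d) = ennreal (\<Prod>i\<in>Basis. (d - c) \<bullet> i)"
      using True by (subst emeasure_lborel_box) (auto simp: less_imp_le inner_simps)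
    moreover have "box c d \<subseteq> box l r"
      using cd by auto
    ultimately show ?thesis
      using cd boxes[OF True] \<alpha> by (simp add: emeasure_eq_measure ennreal_mult)
  next
    case False
    then have "box c d = {}"
      by (auto simp: box_eq_empty not_less)
    then show ?thesis
      using cd by simp
  qed
qed

lemma density_indicator_box_eq_scaled_lborel:
  "density \<nu> (indicator (box l r)) = density lborel (\<lambda>x. ennreal \<alpha> * indicator (box l r) x)"
    (is "?M1 = ?M2")
proof (rule measure_eqI_generator_eq[where E = "range (\<lambda>(a, b). box a b)" and \<Omega> = UNIV
      and A = "\<lambda>n. box (- (real n *\<^sub>R One)) (real n *\<^sub>R One)"])
  interpret finite_measure \<nu> by (rule \<nu>(1))
  have M1: "emeasure ?M1 Y = emeasure \<nu> (Y \<inter> box l r)" if "Y \<in> sets borel" for Y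
    using that \<nu>(2) by (simp add: emeasure_restricted Int_commute)
  have M2: "emeasure ?M2 Y = ennreal \<alpha> * emeasure lborel (Y \<inter> box l r)" if "Y \<in> sets borel" for Y
    using that by (simp add: emeasure_density_cmult_indicator)
  show "Int_stable (range (\<lambda>(a, b). box a b :: 'a set))"
    by (auto simp: Int_stable_def box_Int_box)
  show "sets ?M1 = sigma_sets UNIV (range (\<lambda>(a, b). box a b))"
    "sets ?M2 = sigma_sets UNIV (range (\<lambda>(a, b). box a b))"
    using \<nu>(2) by (simp_all add: borel_eq_box)
  show "(\<Union>n. box (- (real n *\<^sub>R One)) (real n *\<^sub>R One)) = (UNIV :: 'a set)"
    by (rule UN_box_eq_UNIV)
  show "emeasure ?M1 (box (- (real n *\<^sub>R One)) (real n *\<^sub>R One)) \<noteq> \<infinity>" for n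
    by (subst M1) (auto simp: emeasure_eq_measure)
  show "emeasure ?M1 Y = emeasure ?M2 Y" if "Y \<in> range (\<lambda>(a, b). box a b)" for Y
    using that M1 M2 emeasure_box_Int_box_eq_scaled_lborel by auto
qed auto

lemma measure_Int_box_eq_scaled_lborel:
  assumes X: "X \<in> sets borel"
  shows "measure \<nu> (X \<inter> box l r) = \<alpha> * measure lborel (X \<inter> box l r)"
proof -
  have "emeasure \<nu> (X \<inter> box l r) = emeasure (density \<nu> (indicator (box l r))) X"
    using X \<nu>(2) by (simp add: emeasure_restricted Int_commute)
  also have "\<dots> = ennreal \<alpha> * emeasure lborel (X \<inter> box l r)"
    unfolding density_indicator_box_eq_scaled_lborel using X by (simp add: emeasure_density_cmult_indicator)
  finally have "emeasure \<nu> (X \<inter> box l r) = ennreal \<alpha> * emeasure lborel (X \<inter> box l r)" .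
  moreover have "emeasure lborel (X \<inter> box l r) \<le> emeasure lborel (box l r)"
    using X by (intro emeasure_mono) auto
  then have "emeasure lborel (X \<inter> box l r) < \<infinity>"
    using emeasure_lborel_box_finite[of l r] by (rule order.strict_trans1)
  then have "emeasure lborel (X \<inter> box l r) = ennreal (measure lborel (X \<inter> box l r))"
    by (intro emeasure_eq_ennreal_measure) simp
  ultimately show ?thesis
    using \<alpha> \<nu>(1) by (simp add: finite_measure.emeasure_eq_measure ennreal_mult[symmetric] measure_nonneg)
qed

end

locale box_translation_invariant =
  fixes \<nu> :: "'a::euclidean_space measure" and l r :: 'a
  assumes finite: "finite_measure \<nu>" and sets_eq: "sets \<nu> = sets borel"
    and nonempty: "\<forall>i\<in>Basis. l \<bullet> i < r \<bullet> i"
    and null_hyperplane: "\<And>i c. i \<in> Basis \<Longrightarrow> measure \<nu> {x. x \<bullet> i = c} = 0"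
    and translation_invariant: "\<And>a b w. \<forall>i\<in>Basis. a \<bullet> i < b \<bullet> i \<Longrightarrow> box a b \<subseteq> box l r \<Longrightarrow>
       box (a + w) (b + w) \<subseteq> box l r \<Longrightarrow> measure \<nu> (box a b) = measure \<nu> (box (a + w) (b + w))"
begin

text \<open>By invariance the measure of a box inside \<open>box l r\<close> depends only on its side vector; as a
  function of each side length it is additive, hence linear.\<close>

definition side :: 'a where
  "side = r - l"

definition corner_measure :: "'a \<Rightarrow> real" where
  "corner_measure h = measure \<nu> (box l (l + h))"

definition admissible :: "'a \<Rightarrow> bool" where
  "admissible h \<longleftrightarrow> (\<forall>j\<in>Basis. 0 < h \<bullet> j \<and> h \<bullet> j \<le> side \<bullet> j)"

lemma admissible_side: "admissible side"
  using nonempty by (auto simp: admissible_def side_def inner_simps)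

lemma admissible_set_coord:
  "admissible h \<Longrightarrow> i \<in> Basis \<Longrightarrow> 0 < t \<Longrightarrow> t \<le> side \<bullet> i \<Longrightarrow> admissible (set_coord h i t)"
  by (auto simp: admissible_def inner_set_coord)

lemma measure_box_eq_corner_measure:
  assumes ab: "\<forall>i\<in>Basis. a \<bullet> i < b \<bullet> i" and sub: "box a b \<subseteq> box l r"
  shows "measure \<nu> (box a b) = corner_measure (b - a)"
proof -
  have "\<forall>i\<in>Basis. l \<bullet> i \<le> a \<bullet> i \<and> b \<bullet> i \<le> r \<bullet> i"
    using box_subset_box_iff[OF ab] sub by blast
  then have "box (a + (l - a)) (b + (l - a)) \<subseteq> box l r"
    using ab by (subst box_subset_box_iff) (auto simp: inner_simps)
  from translation_invariant[OF ab sub this] show ?thesis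
    by (simp add: corner_measure_def algebra_simps)
qed

lemma corner_measure_add:
  assumes h: "admissible h" and i: "i \<in> Basis" and x: "0 < x" and y: "0 < y" and xy: "x + y = h \<bullet> i"
  shows "corner_measure h = corner_measure (set_coord h i x) + corner_measure (set_coord h i y)"
proof -
  have hpos: "\<forall>j\<in>Basis. 0 < h \<bullet> j" and hside: "\<forall>j\<in>Basis. h \<bullet> j \<le> side \<bullet> j"
    using h by (auto simp: admissible_def)
  have "measure \<nu> (box l (l + h)) = measure \<nu> (box l (set_coord (l + h) i (l \<bullet> i + x)))
      + measure \<nu> (box (set_coord l i (l \<bullet> i + x)) (l + h))"
    using i x y xy by (intro measure_box_split finite sets_eq null_hyperplane) (auto simp: inner_simps)
  moreover have "set_coord (l + h) i (l \<bullet> i + x) = l + set_coord h i x"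
    by (rule euclidean_eqI) (simp add: i inner_set_coord inner_simps)
  moreover have "set_coord l i (l \<bullet> i + x) = l + x *\<^sub>R i"
    by (rule euclidean_eqI) (auto simp: i inner_set_coord inner_simps inner_Basis)
  moreover have "measure \<nu> (box (l + x *\<^sub>R i) (l + h)) = corner_measure (set_coord h i y)"
  proof -
    have ab: "\<forall>j\<in>Basis. (l + x *\<^sub>R i) \<bullet> j < (l + h) \<bullet> j"
      using hpos x y xy i by (auto simp: inner_simps inner_Basis)
    have "\<forall>j\<in>Basis. l \<bullet> j \<le> (l + x *\<^sub>R i) \<bullet> j \<and> (l + h) \<bullet> j \<le> r \<bullet> j"
      using hside x i by (auto simp: inner_simps inner_Basis side_def)
    then have sub: "box (l + x *\<^sub>R i) (l + h) \<subseteq> box l r"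
      using box_subset_box_iff[OF ab] by blast
    have "y - h \<bullet> i = - x"
      using xy by simp
    then have "(l + h) - (l + x *\<^sub>R i) = set_coord h i y"
      by (simp add: set_coord_def)
    then show ?thesis
      using measure_box_eq_corner_measure[OF ab sub] by simp
  qed
  ultimately show ?thesis
    by (simp add: corner_measure_def)
qed

lemma corner_measure_linear_in_coord:
  assumes h: "admissible h" and i: "i \<in> Basis"
  shows "corner_measure h = (h \<bullet> i) / (side \<bullet> i) * corner_measure (set_coord h i (side \<bullet> i))"
proof -
  have "corner_measure (set_coord h i (h \<bullet> i)) =
      (h \<bullet> i) / (side \<bullet> i) * corner_measure (set_coord h i (side \<bullet> i))"
  proof (rule additive_nonneg_on_interval_linear[where \<phi> = "\<lambda>t. corner_measure (set_coord h i t)"])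
    show "0 < side \<bullet> i"
      using admissible_side i by (auto simp: admissible_def)
    show "0 \<le> corner_measure (set_coord h i t)" for t
      by (simp add: corner_measure_def)
    show "corner_measure (set_coord h i (x + y)) = corner_measure (set_coord h i x) + corner_measure (set_coord h i y)"
      if "0 < x" "0 < y" "x + y \<le> side \<bullet> i" for x y
      using corner_measure_add[OF admissible_set_coord[OF h i, of "x + y"] i that(1,2)] that i
      by (simp add: inner_set_coord)
  qed (use h i in \<open>auto simp: admissible_def\<close>)
  then show ?thesis
    using i by simp
qed

definition fill_coords :: "'a set \<Rightarrow> 'a \<Rightarrow> 'a" where
  "fill_coords S h = (\<Sum>j\<in>Basis. (if j \<in> S then side \<bullet> j else h \<bullet> j) *\<^sub>R j)"

lemma inner_fill_coords: "j \<in> Basis \<Longrightarrow> fill_coords S h \<bullet> j = (if j \<in> S then side \<bullet> j else h \<bullet> j)"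
  by (simp add: fill_coords_def inner_sum_left_Basis)

lemma corner_measure_eq_prod_fill_coords:
  assumes "finite S" "S \<subseteq> Basis" "admissible h"
  shows "corner_measure h = (\<Prod>i\<in>S. (h \<bullet> i) / (side \<bullet> i)) * corner_measure (fill_coords S h)"
  using assms
proof (induction S rule: finite_induct)
  case empty
  have "fill_coords {} h = h"
    by (rule euclidean_eqI) (simp add: inner_fill_coords)
  then show ?case by simp
next
  case (insert i S)
  have i: "i \<in> Basis"
    using insert by auto
  have "admissible (fill_coords S h)"
    using insert admissible_side by (auto simp: admissible_def inner_fill_coords)
  then have "corner_measure (fill_coords S h) =
      (h \<bullet> i) / (side \<bullet> i) * corner_measure (set_coord (fill_coords S h) i (side \<bullet> i))"
    using corner_measure_linear_in_coord[OF _ i] insert.hyps(2) i by (simp add: inner_fill_coords)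
  moreover have "set_coord (fill_coords S h) i (side \<bullet> i) = fill_coords (insert i S) h"
    by (rule euclidean_eqI) (auto simp: i inner_set_coord inner_fill_coords)
  ultimately show ?case
    using insert by (simp add: mult_ac)
qed

definition density_const :: real where
  "density_const = corner_measure side / (\<Prod>i\<in>Basis. side \<bullet> i)"

lemma density_const_nonneg: "0 \<le> density_const"
  using admissible_side unfolding density_const_def corner_measure_def
  by (intro divide_nonneg_nonneg prod_nonneg) (auto simp: admissible_def less_imp_le)

lemma measure_box_eq_density_const:
  assumes ab: "\<forall>i\<in>Basis. a \<bullet> i < b \<bullet> i" and sub: "box a b \<subseteq> box l r"
  shows "measure \<nu> (box a b) = density_const * (\<Prod>i\<in>Basis. (b - a) \<bullet> i)"
proof -
  have "admissible (b - a)"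
    using ab sub box_subset_box_iff[OF ab] by (auto simp: admissible_def side_def inner_simps)
  moreover have "fill_coords Basis (b - a) = side"
    by (rule euclidean_eqI) (simp add: inner_fill_coords)
  ultimately show ?thesis
    using measure_box_eq_corner_measure[OF ab sub] corner_measure_eq_prod_fill_coords[of Basis "b - a"]
    by (simp add: density_const_def prod_dividef)
qed

theorem measure_Int_box_eq:
  "X \<in> sets borel \<Longrightarrow> measure \<nu> (X \<inter> box l r) = density_const * measure lborel (X \<inter> box l r)"
  using measure_Int_box_eq_scaled_lborel[OF finite sets_eq density_const_nonneg measure_box_eq_density_const] .

end

section \<open>Unions of open sets and disjoint translates\<close>

lemma translation_box: "(+) v ` box a b = box (v + a) (v + (b::'a::euclidean_space))"
proof (rule set_eqI)
  fix y
  have "y \<in> box (v + a) (v + b) \<longleftrightarrow> y - v \<in> box a b"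
    by (auto simp: mem_box inner_simps)
  then show "y \<in> (+) v ` box a b \<longleftrightarrow> y \<in> box (v + a) (v + b)"
    by (auto intro: image_eqI[of _ _ "y - v"])
qed

lemma ennreal_mult_of_nat_bounded_eq_0:
  fixes x C :: ennreal
  assumes le: "\<And>n::nat. of_nat n * x \<le> C" and C: "C < \<infinity>"
  shows "x = 0"
proof -
  have "x < \<top>"
    using le[of 1] C by simp
  then obtain r where r: "x = ennreal r" "0 \<le> r"
    by (cases x) auto
  obtain c where c: "C = ennreal c" "0 \<le> c"
    using C by (cases C) auto
  have "real n * r \<le> c" for n
    using le[of n] r c by (auto simp: ennreal_of_nat_eq_real_of_nat ennreal_mult[symmetric] ennreal_le_iff2)
  then have "r \<le> 0"
    by (metis c(2) r(2) reals_Archimedean3 not_le nle_le mult.commute)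
  then show ?thesis
    using r by simp
qed

lemma emeasure_Int_UN_eq:
  fixes A :: "nat \<Rightarrow> 'a::topological_space set"
  assumes sets: "sets \<nu> = sets borel" "sets M = sets borel" and A: "\<And>n. A n \<in> sets borel"
    and eq: "\<And>n Y. Y \<in> sets borel \<Longrightarrow> emeasure \<nu> (Y \<inter> A n) = c * emeasure M (Y \<inter> A n)"
    and X: "X \<in> sets borel"
  shows "emeasure \<nu> (X \<inter> (\<Union>n. A n)) = c * emeasure M (X \<inter> (\<Union>n. A n))"
proof -
  define D where "D n = X \<inter> disjointed A n" for n
  have D: "D n \<in> sets borel" for n
    unfolding D_def using X A sets.range_disjointed_sets[of A borel] by auto
  have disj: "disjoint_family D"
    using disjoint_family_disjointed[of A] by (auto simp: D_def disjoint_family_on_def)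
  have DU: "(\<Union>n. D n) = X \<inter> (\<Union>n. A n)"
    unfolding D_def using UN_disjointed_eq[of A] by auto
  have "emeasure \<nu> (D n) = c * emeasure M (D n)" for n
  proof -
    have "D n \<inter> A n = D n"
      using disjointed_subset[of A n] by (auto simp: D_def)
    then show ?thesis
      using eq[OF D[of n], of n] by simp
  qed
  then have "(\<Sum>n. emeasure \<nu> (D n)) = c * (\<Sum>n. emeasure M (D n))"
    by (simp add: ennreal_suminf_cmult)
  moreover have "(\<Sum>n. emeasure \<nu> (D n)) = emeasure \<nu> (X \<inter> (\<Union>n. A n))"
    "(\<Sum>n. emeasure M (D n)) = emeasure M (X \<inter> (\<Union>n. A n))"
    unfolding DU[symmetric] using D disj sets by (intro suminf_emeasure; auto)+
  ultimately show ?thesis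
    by simp
qed

lemma emeasure_Int_Union_open_eq:
  fixes \<C> :: "'a::second_countable_topology set set"
  assumes sets: "sets \<nu> = sets borel" "sets M = sets borel" and \<C>_open: "\<And>C. C \<in> \<C> \<Longrightarrow> open C"
    and eq: "\<And>C Y. C \<in> \<C> \<Longrightarrow> Y \<in> sets borel \<Longrightarrow> emeasure \<nu> (Y \<inter> C) = c * emeasure M (Y \<inter> C)"
    and X: "X \<in> sets borel"
  shows "emeasure \<nu> (X \<inter> \<Union>\<C>) = c * emeasure M (X \<inter> \<Union>\<C>)"
proof -
  obtain \<C>' where \<C>': "\<C>' \<subseteq> \<C>" "countable \<C>'" "\<Union>\<C>' = \<Union>\<C>"
    using \<C>_open by (rule Lindelof)
  show ?thesis
  proof (cases "\<C>' = {}")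
    case False
    define A where "A = from_nat_into \<C>'"
    have A: "A n \<in> \<C>" for n
      using from_nat_into[OF False] \<C>'(1) by (auto simp: A_def)
    have "A n \<in> sets borel" for n
      using A \<C>_open by auto
    moreover have "\<Union>\<C> = (\<Union>n. A n)"
      using range_from_nat_into[OF False \<C>'(2)] \<C>'(3) by (simp add: A_def)
    ultimately show ?thesis
      using emeasure_Int_UN_eq[OF sets _ eq[OF A] X] by simp
  next
    case True
    then have "\<Union>\<C> = {}"
      using \<C>'(3) by simp
    then show ?thesis
      by (metis Int_empty_right emeasure_empty mult_zero_right)
  qed
qed

lemma emeasure_lebesgue_translation:
  fixes v :: "'a::euclidean_space"
  shows "emeasure lebesgue ((+) v ` S) = emeasure lebesgue S"
proof -
  have "(+) v ` S = (\<lambda>x. 1 *\<^sub>R x + v) ` S"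
    by (simp add: add.commute)
  then show ?thesis
    using emeasure_lebesgue_affine[of 1 v S] by simp
qed

lemma null_sets_if_bounded_translates_disjoint:
  fixes G :: "'a::euclidean_space set" and d :: 'a
  assumes G: "G \<in> sets lebesgue" "G \<subseteq> cball 0 R"
    and disj: "\<And>x e. x \<in> G \<Longrightarrow> 0 < e \<Longrightarrow> x + e *\<^sub>R d \<notin> G"
  shows "G \<in> null_sets lebesgue"
proof -
  let ?C = "cball (0::'a) (R + norm d)"
  define T where "T n k = (+) ((real k / real n) *\<^sub>R d) ` G" for n k :: nat
  have T: "T n k \<in> sets lebesgue" "emeasure lebesgue (T n k) = emeasure lebesgue G" for n k
    unfolding T_def by (rule lebesgue_sets_translation[OF G(1)], rule emeasure_lebesgue_translation)
  have T_disj: "disjoint_family_on (T n) {..<n}" for n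
  proof -
    have "T n k \<inter> T n k' = {}" if "k < k'" "k' < n" for k k'
    proof -
      have "real k / real n < real k' / real n"
        using that by (simp add: divide_strict_right_mono)
      then have "x \<noteq> x' + (real k' / real n - real k / real n) *\<^sub>R d" if "x \<in> G" "x' \<in> G" for x x'
        using disj[of x' "real k' / real n - real k / real n"] that by auto
      then show ?thesis
        by (auto simp: T_def algebra_simps)
    qed
    then show ?thesis
      unfolding disjoint_family_on_def by (metis Int_commute lessThan_iff linorder_neqE_nat)
  qed
  have T_sub: "(\<Union>k<n. T n k) \<subseteq> ?C" for n
  proof clarify
    fix k z assume "k < n" "z \<in> T n k"
    then obtain x where x: "x \<in> G" "z = (real k / real n) *\<^sub>R d + x"
      by (auto simp: T_def)
    have "norm z \<le> (real k / real n) * norm d + norm x"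
      using x by (simp add: norm_triangle_le)
    also have "\<dots> \<le> 1 * norm d + R"
      using x G(2) \<open>k < n\<close> by (intro add_mono mult_right_mono) auto
    finally show "z \<in> ?C"
      by simp
  qed
  have "of_nat n * emeasure lebesgue G \<le> emeasure lebesgue ?C" for n :: nat
  proof -
    have "of_nat n * emeasure lebesgue G = (\<Sum>k<n. emeasure lebesgue (T n k))"
      using T by simp
    also have "\<dots> = emeasure lebesgue (\<Union>k<n. T n k)"
      using T T_disj by (intro sum_emeasure) auto
    also have "\<dots> \<le> emeasure lebesgue ?C"
      by (rule emeasure_mono[OF T_sub]) simp
    finally show ?thesis .
  qed
  moreover have "emeasure lebesgue ?C < \<infinity>"
    using emeasure_bounded_finite[of ?C] by simp
  ultimately have "emeasure lebesgue G = 0"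
    by (rule ennreal_mult_of_nat_bounded_eq_0)
  then show ?thesis
    using G by (simp add: null_sets_def)
qed

lemma null_sets_if_translates_disjoint:
  fixes F :: "'a::euclidean_space set" and d :: 'a
  assumes F: "F \<in> sets lebesgue" and disj: "\<And>x e. x \<in> F \<Longrightarrow> 0 < e \<Longrightarrow> x + e *\<^sub>R d \<notin> F"
  shows "F \<in> null_sets lebesgue"
proof -
  have "F = (\<Union>R::nat. F \<inter> cball 0 (real R))"
    by (auto simp: real_arch_simple)
  also have "\<dots> \<in> null_sets lebesgue"
    using F disj by (intro null_sets_UN null_sets_if_bounded_translates_disjoint[where d = d]) auto
  finally show ?thesis .
qed

section \<open>Open boxes spanned by the origin and a point\<close>

definition cell :: "'a::euclidean_space \<Rightarrow> 'a set" where
  "cell p = box (\<Sum>i\<in>Basis. min 0 (p \<bullet> i) *\<^sub>R i) (\<Sum>i\<in>Basis. max 0 (p \<bullet> i) *\<^sub>R i)"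

lemma mem_cell: "x \<in> cell p \<longleftrightarrow> (\<forall>i\<in>Basis. min 0 (p \<bullet> i) < x \<bullet> i \<and> x \<bullet> i < max 0 (p \<bullet> i))"
  by (simp add: cell_def mem_box inner_sum_left_Basis)

lemma open_cell: "open (cell p)"
  unfolding cell_def by (rule open_box)

lemma cell_subset_rect: "cell p \<subseteq> rect 0 p"
  by (auto simp: mem_cell rect_def less_imp_le)

lemma cell_subset_open_orthant: "p \<in> open_orthant s \<Longrightarrow> cell p \<subseteq> open_orthant s"
  by (fastforce simp: mem_cell open_orthant_def zero_less_mult_iff)

lemma cell_corners_less:
  assumes "p \<in> open_orthant s"
  shows "\<forall>i\<in>Basis. (\<Sum>j\<in>Basis. min 0 (p \<bullet> j) *\<^sub>R j) \<bullet> i < (\<Sum>j\<in>Basis. max 0 (p \<bullet> j) *\<^sub>R j) \<bullet> i"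
proof
  fix i :: 'a assume i: "i \<in> Basis"
  then have "p \<bullet> i \<noteq> 0"
    using assms by (auto simp: open_orthant_def)
  then show "(\<Sum>j\<in>Basis. min 0 (p \<bullet> j) *\<^sub>R j) \<bullet> i < (\<Sum>j\<in>Basis. max 0 (p \<bullet> j) *\<^sub>R j) \<bullet> i"
    using i by (simp add: inner_sum_left_Basis min_def max_def)
qed

lemma measure_lborel_cell_pos: "p \<in> open_orthant s \<Longrightarrow> 0 < measure lborel (cell p)"
  using cell_corners_less[of p s]
  by (simp add: cell_def measure_lborel_box_eq less_imp_le prod_pos inner_diff_left)

lemma cell_subset_cell_Int:
  assumes "p \<in> open_orthant s" "q \<in> open_orthant s"
  shows "\<exists>m\<in>open_orthant s. cell m \<subseteq> cell p \<inter> cell q"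
proof
  define m where "m = (\<Sum>i\<in>Basis. (if \<bar>p \<bullet> i\<bar> \<le> \<bar>q \<bullet> i\<bar> then p \<bullet> i else q \<bullet> i) *\<^sub>R i)"
  have m: "m \<bullet> i = (if \<bar>p \<bullet> i\<bar> \<le> \<bar>q \<bullet> i\<bar> then p \<bullet> i else q \<bullet> i)" if "i \<in> Basis" for i
    using that by (simp add: m_def inner_sum_left_Basis)
  have same_sign: "(0 < p \<bullet> i \<and> 0 < q \<bullet> i) \<or> (p \<bullet> i < 0 \<and> q \<bullet> i < 0)" if "i \<in> Basis" for i
    using assms that by (fastforce simp: open_orthant_def zero_less_mult_iff)
  show "m \<in> open_orthant s"
    using assms by (auto simp: open_orthant_def m)
  have "(min 0 (p \<bullet> i) < x \<bullet> i \<and> x \<bullet> i < max 0 (p \<bullet> i)) \<and>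
      (min 0 (q \<bullet> i) < x \<bullet> i \<and> x \<bullet> i < max 0 (q \<bullet> i))"
    if "i \<in> Basis" "min 0 (m \<bullet> i) < x \<bullet> i" "x \<bullet> i < max 0 (m \<bullet> i)" for i x
    using that(2,3) same_sign[OF that(1)] unfolding m[OF that(1)] by (auto split: if_splits)
  then show "cell m \<subseteq> cell p \<inter> cell q"
    by (auto simp: mem_cell)
qed

section \<open>Splitting a uniform distribution into two OU distributions\<close>

locale OU_uniform_split =
  fixes s :: "'a::euclidean_space \<Rightarrow> real" and K :: "'a set" and \<nu>1 \<nu>2 :: "'a measure" and t :: real
  assumes signs: "\<And>i. i \<in> Basis \<Longrightarrow> s i \<noteq> 0"
    and K_orthant: "\<And>x. x \<in> K \<Longrightarrow> outward s x"
    and K_OU: "OU_set 0 K" and K_sets: "K \<in> sets lebesgue"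
    and K_pos: "0 < emeasure lebesgue K" and K_fin: "emeasure lebesgue K < \<infinity>"
    and \<nu>1: "prob_space \<nu>1" "sets \<nu>1 = sets borel" "shift_decreasing s \<nu>1"
    and \<nu>2: "prob_space \<nu>2" "sets \<nu>2 = sets borel" "shift_decreasing s \<nu>2"
    and t: "0 < t" "t < 1"
    and split: "\<And>A. A \<in> sets borel \<Longrightarrow>
      emeasure (unif K) A = ennreal t * emeasure \<nu>1 A + ennreal (1 - t) * emeasure \<nu>2 A"
begin

lemma measure_K_pos: "0 < measure lebesgue K"
  using K_pos K_fin by (simp add: measure_def enn2real_positive_iff)

lemma component:
  assumes "\<nu> \<in> {\<nu>1, \<nu>2}"
  shows "prob_space \<nu>" "sets \<nu> = sets borel" "shift_decreasing s \<nu>"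
  using assms \<nu>1 \<nu>2 by auto

lemma measure_split:
  assumes A: "A \<in> sets borel"
  shows "measure (unif K) A = t * measure \<nu>1 A + (1 - t) * measure \<nu>2 A"
proof -
  interpret P1: prob_space \<nu>1 by (rule \<nu>1(1))
  interpret P2: prob_space \<nu>2 by (rule \<nu>2(1))
  have "emeasure (unif K) A = ennreal (t * measure \<nu>1 A + (1 - t) * measure \<nu>2 A)"
    using split[OF A] t by (simp add: P1.emeasure_eq_measure P2.emeasure_eq_measure ennreal_mult ennreal_plus)
  then show ?thesis
    using t by (intro measure_eq_emeasure_eq_ennreal) auto
qed

text \<open>Both components can only lose mass under the shift, while their mixture \<open>unif K\<close> loses
  none because the shifted set stays inside \<open>K\<close>.\<close>

lemma measure_outward_translate_eq:
  assumes B: "open B" "B \<subseteq> open_orthant s" and v: "outward s v" and BK: "(+) v ` B \<subseteq> K"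
    and \<nu>: "\<nu> \<in> {\<nu>1, \<nu>2}"
  shows "measure \<nu> ((+) v ` B) = measure \<nu> B"
proof -
  have Bb: "B \<in> sets borel" and Bvb: "(+) v ` B \<in> sets borel"
    using B open_translation[OF B(1)] by auto
  have "B \<subseteq> K"
    using BK B(2) OU_set_outward_shift[OF K_OU _ v] by blast
  then have "measure lebesgue ((+) v ` B \<inter> K) = measure lebesgue (B \<inter> K)"
    using BK by (simp add: Int_absorb2 measure_translation)
  then have "measure (unif K) ((+) v ` B) = measure (unif K) B"
    using measure_unif[OF K_sets K_pos K_fin] Bb Bvb by simp
  then have "t * measure \<nu>1 ((+) v ` B) + (1 - t) * measure \<nu>2 ((+) v ` B) =
      t * measure \<nu>1 B + (1 - t) * measure \<nu>2 B"
    using measure_split[OF Bb] measure_split[OF Bvb] by simp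
  moreover have "measure \<nu>1 ((+) v ` B) \<le> measure \<nu>1 B" "measure \<nu>2 ((+) v ` B) \<le> measure \<nu>2 B"
    using measure_outward_translate_le[OF \<nu>1 B v] measure_outward_translate_le[OF \<nu>2 B v] by auto
  ultimately have "t * (measure \<nu>1 B - measure \<nu>1 ((+) v ` B)) = 0"
    "(1 - t) * (measure \<nu>2 B - measure \<nu>2 ((+) v ` B)) = 0"
    using t by (smt (verit) mult_nonneg_nonneg right_diff_distrib)+
  then show ?thesis
    using \<nu> t by auto
qed

lemma measure_hyperplane:
  assumes i: "i \<in> Basis" and \<nu>: "\<nu> \<in> {\<nu>1, \<nu>2}"
  shows "measure \<nu> {x. x \<bullet> i = c} = 0"
proof -
  let ?H = "{x. x \<bullet> i = c}"
  have H: "?H \<in> sets borel"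
    using i by simp
  have "?H \<in> null_sets lebesgue"
    using negligible_standard_hyperplane[OF i] by (simp add: negligible_iff_null_sets)
  then have "measure lebesgue (?H \<inter> K) = 0"
    using K_sets by (simp add: measure_eq_0_null_sets null_set_Int2)
  then have "t * measure \<nu>1 ?H + (1 - t) * measure \<nu>2 ?H = 0"
    using measure_split[OF H] measure_unif[OF K_sets K_pos K_fin H] by simp
  moreover have "0 \<le> measure \<nu>1 ?H" "0 \<le> measure \<nu>2 ?H"
    by simp_all
  ultimately show ?thesis
    using \<nu> t by (auto simp: add_nonneg_eq_0_iff)
qed

lemma cell_subset_K: "p \<in> K \<Longrightarrow> cell p \<subseteq> K"
  using cell_subset_rect K_OU by (auto simp: OU_set_def)

text \<open>Two translates of a box inside a cell are both outward translates of a third box inside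
  the cell: move the box inward in every coordinate where the translation goes inward.\<close>

lemma measure_box_translate_in_cell:
  assumes p: "p \<in> K" "p \<in> open_orthant s" and \<nu>: "\<nu> \<in> {\<nu>1, \<nu>2}"
    and ab: "\<forall>i\<in>Basis. a \<bullet> i < b \<bullet> i" and sub: "box a b \<subseteq> cell p" "box (a + w) (b + w) \<subseteq> cell p"
  shows "measure \<nu> (box a b) = measure \<nu> (box (a + w) (b + w))"
proof -
  define u :: 'a where "u = (\<Sum>i\<in>Basis. (if s i * (w \<bullet> i) \<le> 0 then w \<bullet> i else 0) *\<^sub>R i)"
  have u: "u \<bullet> i = (if s i * (w \<bullet> i) \<le> 0 then w \<bullet> i else 0)" if "i \<in> Basis" for i
    using that by (simp add: u_def inner_sum_left_Basis)
  define C where "C = box (a + u) (b + u)"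
  let ?l = "\<Sum>i\<in>Basis. min 0 (p \<bullet> i) *\<^sub>R i" and ?r = "\<Sum>i\<in>Basis. max 0 (p \<bullet> i) *\<^sub>R i"
  have abw: "\<forall>i\<in>Basis. (a + w) \<bullet> i < (b + w) \<bullet> i" "\<forall>i\<in>Basis. (a + u) \<bullet> i < (b + u) \<bullet> i"
    using ab by (simp_all add: inner_simps)
  have "\<forall>i\<in>Basis. ?l \<bullet> i \<le> a \<bullet> i \<and> b \<bullet> i \<le> ?r \<bullet> i"
    "\<forall>i\<in>Basis. ?l \<bullet> i \<le> (a + w) \<bullet> i \<and> (b + w) \<bullet> i \<le> ?r \<bullet> i"
    using sub box_subset_box_iff[OF ab] box_subset_box_iff[OF abw(1)] by (simp_all add: cell_def)
  then have "\<forall>i\<in>Basis. ?l \<bullet> i \<le> (a + u) \<bullet> i \<and> (b + u) \<bullet> i \<le> ?r \<bullet> i"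
    by (auto simp: inner_simps u)
  then have C: "C \<subseteq> cell p"
    unfolding C_def cell_def using box_subset_box_iff[OF abw(2)] by blast
  have "open C" "C \<subseteq> open_orthant s"
    using C cell_subset_open_orthant[OF p(2)] by (auto simp: C_def)
  moreover have "outward s (- u)" "outward s (w - u)"
    by (auto simp: outward_def inner_simps u)
  moreover have "(+) (- u) ` C = box a b" "(+) (w - u) ` C = box (a + w) (b + w)"
    unfolding C_def translation_box by (simp_all add: algebra_simps)
  ultimately show ?thesis
    using measure_outward_translate_eq[OF _ _ _ _ \<nu>] sub cell_subset_K[OF p(1)] by (metis order_trans)
qed

lemma box_translation_invariant_cell:
  assumes p: "p \<in> K" "p \<in> open_orthant s" and \<nu>: "\<nu> \<in> {\<nu>1, \<nu>2}"
  shows "box_translation_invariant \<nu> (\<Sum>i\<in>Basis. min 0 (p \<bullet> i) *\<^sub>R i) (\<Sum>i\<in>Basis. max 0 (p \<bullet> i) *\<^sub>R i)"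
proof (rule box_translation_invariant.intro)
  show "finite_measure \<nu>"
    using component(1)[OF \<nu>] by (simp add: prob_space_def)
  show "sets \<nu> = sets borel"
    using component(2)[OF \<nu>] .
  show "\<forall>i\<in>Basis. (\<Sum>i\<in>Basis. min 0 (p \<bullet> i) *\<^sub>R i) \<bullet> i < (\<Sum>i\<in>Basis. max 0 (p \<bullet> i) *\<^sub>R i) \<bullet> i"
    using cell_corners_less[OF p(2)] .
  show "measure \<nu> {x. x \<bullet> i = c} = 0" if "i \<in> Basis" for i c
    using measure_hyperplane[OF that \<nu>] .
  show "measure \<nu> (box a b) = measure \<nu> (box (a + w) (b + w))"
    if "\<forall>i\<in>Basis. a \<bullet> i < b \<bullet> i"
      "box a b \<subseteq> box (\<Sum>i\<in>Basis. min 0 (p \<bullet> i) *\<^sub>R i) (\<Sum>i\<in>Basis. max 0 (p \<bullet> i) *\<^sub>R i)"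
      "box (a + w) (b + w) \<subseteq> box (\<Sum>i\<in>Basis. min 0 (p \<bullet> i) *\<^sub>R i) (\<Sum>i\<in>Basis. max 0 (p \<bullet> i) *\<^sub>R i)"
    for a b w
    using measure_box_translate_in_cell[OF p \<nu> that(1)] that(2,3) by (simp add: cell_def)
qed

definition cell_density :: "'a measure \<Rightarrow> 'a \<Rightarrow> real" where
  "cell_density \<nu> p = measure \<nu> (cell p) / measure lborel (cell p)"

lemma measure_Int_cell:
  assumes p: "p \<in> K \<inter> open_orthant s" and \<nu>: "\<nu> \<in> {\<nu>1, \<nu>2}" and X: "X \<in> sets borel"
  shows "measure \<nu> (X \<inter> cell p) = cell_density \<nu> p * measure lborel (X \<inter> cell p)"
proof -
  interpret box_translation_invariant \<nu> "\<Sum>i\<in>Basis. min 0 (p \<bullet> i) *\<^sub>R i" "\<Sum>i\<in>Basis. max 0 (p \<bullet> i) *\<^sub>R i"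
    using box_translation_invariant_cell p \<nu> by blast
  have "measure \<nu> (cell p) = density_const * measure lborel (cell p)"
    using measure_Int_box_eq[of UNIV] by (simp add: cell_def)
  then have "cell_density \<nu> p = density_const"
    using measure_lborel_cell_pos[of p s] p by (simp add: cell_density_def)
  then show ?thesis
    using measure_Int_box_eq[OF X] by (simp add: cell_def)
qed

lemma cell_density_nonneg: "0 \<le> cell_density \<nu> p"
  by (simp add: cell_density_def)

lemma cell_density_eq:
  assumes p: "p \<in> K \<inter> open_orthant s" and q: "q \<in> K \<inter> open_orthant s" and \<nu>: "\<nu> \<in> {\<nu>1, \<nu>2}"
  shows "cell_density \<nu> p = cell_density \<nu> q"
proof -
  obtain m where m: "m \<in> open_orthant s" "cell m \<subseteq> cell p \<inter> cell q"
    using cell_subset_cell_Int p q by blast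
  then have "cell m \<inter> cell p = cell m" "cell m \<inter> cell q = cell m"
    by auto
  then have "cell_density \<nu> p * measure lborel (cell m) = cell_density \<nu> q * measure lborel (cell m)"
    using measure_Int_cell[OF p \<nu>, of "cell m"] measure_Int_cell[OF q \<nu>, of "cell m"] open_cell[of m]
    by simp
  then show ?thesis
    using measure_lborel_cell_pos[OF m(1)] by simp
qed

definition cells_union :: "'a set" where
  "cells_union = \<Union> (cell ` (K \<inter> open_orthant s))"

lemma open_cells_union: "open cells_union"
  unfolding cells_union_def using open_cell by blast

lemma cells_union_subset_K: "cells_union \<subseteq> K"
  unfolding cells_union_def using cell_subset_K by blast

lemma emeasure_Int_cells_union:
  assumes p: "p \<in> K \<inter> open_orthant s" and \<nu>: "\<nu> \<in> {\<nu>1, \<nu>2}" and X: "X \<in> sets borel"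
  shows "emeasure \<nu> (X \<inter> cells_union) = ennreal (cell_density \<nu> p) * emeasure lborel (X \<inter> cells_union)"
  unfolding cells_union_def
proof (rule emeasure_Int_Union_open_eq[OF component(2)[OF \<nu>] sets_lborel _ _ X])
  show "open C" if "C \<in> cell ` (K \<inter> open_orthant s)" for C
    using that open_cell by blast
  fix C Y :: "'a set" assume C: "C \<in> cell ` (K \<inter> open_orthant s)" and Y: "Y \<in> sets borel"
  then obtain q where q: "q \<in> K \<inter> open_orthant s" "C = cell q"
    by blast
  interpret prob_space \<nu>
    using component(1)[OF \<nu>] .
  have "cell q \<in> sets borel"
    using borel_open[OF open_cell[of q]] .
  then have "emeasure lborel (Y \<inter> C) \<le> emeasure lborel (cell q)"
    using q(2) by (intro emeasure_mono) auto
  also have "\<dots> < \<infinity>"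
    unfolding cell_def by (rule emeasure_lborel_box_finite)
  finally have "emeasure lborel (Y \<inter> C) < \<infinity>" .
  then have "emeasure lborel (Y \<inter> C) = ennreal (measure lborel (Y \<inter> C))"
    by (simp add: emeasure_eq_ennreal_measure less_top)
  moreover have "emeasure \<nu> (Y \<inter> C) = ennreal (measure \<nu> (Y \<inter> C))"
    by (rule emeasure_eq_measure)
  ultimately show "emeasure \<nu> (Y \<inter> C) = ennreal (cell_density \<nu> p) * emeasure lborel (Y \<inter> C)"
    using measure_Int_cell[OF q(1) \<nu> Y] cell_density_eq[OF p q(1) \<nu>] cell_density_nonneg
    by (simp add: q(2) ennreal_mult)
qed

definition diagonal :: 'a where
  "diagonal = (\<Sum>i\<in>Basis. s i *\<^sub>R i)"

lemma inner_diagonal: "i \<in> Basis \<Longrightarrow> diagonal \<bullet> i = s i"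
  by (simp add: diagonal_def inner_sum_left_Basis)

text \<open>A point of the open orthant outside every cell cannot be pushed further out along the
  diagonal without leaving \<open>K\<close>: otherwise it would lie in the cell of the pushed point.\<close>

lemma translate_diagonal_notin_K:
  assumes x: "x \<in> K \<inter> open_orthant s - cells_union" and e: "0 < e"
  shows "x + e *\<^sub>R diagonal \<notin> K"
proof
  let ?y = "x + e *\<^sub>R diagonal"
  assume y: "?y \<in> K"
  have xi: "0 < s i * (x \<bullet> i)" if "i \<in> Basis" for i
    using x that by (auto simp: open_orthant_def)
  have yi: "?y \<bullet> i = x \<bullet> i + e * s i" if "i \<in> Basis" for i
    using that by (simp add: inner_simps inner_diagonal)
  have "0 < s i * (?y \<bullet> i)" if "i \<in> Basis" for i
  proof -
    have "s i * (?y \<bullet> i) = s i * (x \<bullet> i) + e * (s i * s i)"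
      unfolding yi[OF that] by (simp add: algebra_simps)
    moreover have "0 < s i * s i"
      using signs[OF that] not_real_square_gt_zero by blast
    ultimately show ?thesis
      using xi[OF that] e by (simp add: add_pos_pos)
  qed
  then have "?y \<in> open_orthant s"
    by (simp add: open_orthant_def)
  moreover have "min 0 (?y \<bullet> i) < x \<bullet> i \<and> x \<bullet> i < max 0 (?y \<bullet> i)" if "i \<in> Basis" for i
  proof -
    have "0 < s i \<and> 0 < x \<bullet> i \<or> s i < 0 \<and> x \<bullet> i < 0"
      using xi[OF that] by (simp add: zero_less_mult_iff)
    moreover have "0 < s i \<Longrightarrow> 0 < e * s i" "s i < 0 \<Longrightarrow> e * s i < 0"
      using e by (simp_all add: mult_pos_neg)
    ultimately show ?thesis
      unfolding yi[OF that] by auto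
  qed
  then have "x \<in> cell ?y"
    by (simp add: mem_cell)
  ultimately have "x \<in> cells_union"
    using y unfolding cells_union_def by blast
  then show False
    using x by blast
qed

lemma K_minus_cells_union_null: "K - cells_union \<in> null_sets lebesgue"
proof -
  let ?F = "K \<inter> open_orthant s - cells_union" and ?H = "\<Union>i\<in>Basis. {x::'a. x \<bullet> i = 0}"
  have "?F \<in> sets lebesgue"
    using K_sets borel_open[OF open_open_orthant[of s]] borel_open[OF open_cells_union]
    by (intro sets.Diff sets.Int) simp_all
  then have F: "?F \<in> null_sets lebesgue"
    using translate_diagonal_notin_K by (intro null_sets_if_translates_disjoint[where d = diagonal]) auto
  have H: "?H \<in> null_sets lebesgue"
    using negligible_standard_hyperplane
    by (intro null_sets_UN') (auto simp: negligible_iff_null_sets countable_finite)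
  have sub: "K - cells_union \<subseteq> ?F \<union> ?H"
  proof
    fix x assume x: "x \<in> K - cells_union"
    show "x \<in> ?F \<union> ?H"
    proof (cases "x \<in> open_orthant s")
      case False
      then obtain i where "i \<in> Basis" "s i * (x \<bullet> i) \<le> 0"
        by (auto simp: open_orthant_def not_less)
      moreover have "0 \<le> s i * (x \<bullet> i)"
        using K_orthant x \<open>i \<in> Basis\<close> by (auto simp: outward_def)
      ultimately show ?thesis
        using signs by auto
    qed (use x in auto)
  qed
  have "K - cells_union \<in> sets lebesgue"
    using K_sets borel_open[OF open_cells_union] by auto
  then show ?thesis
    using null_sets_subset[OF null_sets.Un[OF F H] _ sub] by blast
qed

lemma K_meets_open_orthant: "K \<inter> open_orthant s \<noteq> {}"
proof
  assume "K \<inter> open_orthant s = {}"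
  then have "K - cells_union = K"
    by (simp add: cells_union_def)
  then show False
    using K_minus_cells_union_null K_pos by auto
qed

lemma emeasure_cells_union: "emeasure lborel cells_union = ennreal (measure lebesgue K)"
proof -
  have "emeasure lebesgue cells_union = emeasure lebesgue K"
    using emeasure_Diff_null_set[OF K_minus_cells_union_null K_sets] cells_union_subset_K
    by (simp add: Diff_Diff_Int Int_absorb1)
  also have "\<dots> = ennreal (measure lebesgue K)"
    using K_fin by (intro emeasure_eq_ennreal_measure) simp
  finally show ?thesis
    using borel_open[OF open_cells_union] by simp
qed

lemma measure_Int_cells_union:
  assumes p: "p \<in> K \<inter> open_orthant s" and \<nu>: "\<nu> \<in> {\<nu>1, \<nu>2}" and X: "X \<in> sets borel"
  shows "measure \<nu> (X \<inter> cells_union) = cell_density \<nu> p * measure lborel (X \<inter> cells_union)"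
proof -
  have "emeasure lborel (X \<inter> cells_union) \<le> emeasure lborel cells_union"
    using borel_open[OF open_cells_union] by (intro emeasure_mono) auto
  then have "emeasure lborel (X \<inter> cells_union) < \<infinity>"
    using emeasure_cells_union by (simp add: le_less_trans)
  then have "emeasure lborel (X \<inter> cells_union) = ennreal (measure lborel (X \<inter> cells_union))"
    by (intro emeasure_eq_ennreal_measure) simp
  then have "emeasure \<nu> (X \<inter> cells_union) = ennreal (cell_density \<nu> p * measure lborel (X \<inter> cells_union))"
    using emeasure_Int_cells_union[OF p \<nu> X] cell_density_nonneg by (simp add: ennreal_mult)
  then show ?thesis
    using cell_density_nonneg by (simp add: measure_def)
qed

lemma measure_unif_Int_cells_union:
  assumes X: "X \<in> sets borel"
  shows "measure (unif K) (X \<inter> cells_union) = measure lborel (X \<inter> cells_union) / measure lebesgue K"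
proof -
  have "X \<inter> cells_union \<inter> K = X \<inter> cells_union"
    using cells_union_subset_K by auto
  then show ?thesis
    using measure_unif[OF K_sets K_pos K_fin, of "X \<inter> cells_union"] X open_cells_union by simp
qed

lemma cell_density_eq_inverse:
  assumes p: "p \<in> K \<inter> open_orthant s" and \<nu>: "\<nu> \<in> {\<nu>1, \<nu>2}"
  shows "cell_density \<nu> p = 1 / measure lebesgue K"
proof -
  have U: "cells_union \<in> sets borel"
    using open_cells_union by simp
  have mU: "measure lborel cells_union = measure lebesgue K"
    using emeasure_cells_union by (simp add: measure_def)
  let ?a1 = "cell_density \<nu>1 p * measure lebesgue K" and ?a2 = "cell_density \<nu>2 p * measure lebesgue K"
  have \<nu>U: "measure \<nu>1 cells_union = ?a1" "measure \<nu>2 cells_union = ?a2"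
    using measure_Int_cells_union[OF p _ U] mU by auto
  have "measure (unif K) cells_union = 1"
    using measure_unif_Int_cells_union[OF U] mU measure_K_pos by simp
  then have "t * (1 - ?a1) + (1 - t) * (1 - ?a2) = 0"
    using measure_split[OF U] \<nu>U by (simp add: algebra_simps)
  moreover have "?a1 \<le> 1" "?a2 \<le> 1"
    using prob_space.prob_le_1 \<nu>1(1) \<nu>2(1) \<nu>U by metis+
  then have "0 \<le> t * (1 - ?a1)" "0 \<le> (1 - t) * (1 - ?a2)"
    using t by simp_all
  ultimately have "t * (1 - ?a1) = 0" "(1 - t) * (1 - ?a2) = 0"
    by linarith+
  then have "?a1 = 1" "?a2 = 1"
    using t by simp_all
  then show ?thesis
    using \<nu> measure_K_pos by (auto simp: field_simps)
qed

lemma measure_Int_cells_union_eq_unif: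
  assumes \<nu>: "\<nu> \<in> {\<nu>1, \<nu>2}" and X: "X \<in> sets borel"
  shows "measure \<nu> (X \<inter> cells_union) = measure (unif K) (X \<inter> cells_union)"
proof -
  obtain p where p: "p \<in> K \<inter> open_orthant s"
    using K_meets_open_orthant by blast
  show ?thesis
    using measure_Int_cells_union[OF p \<nu> X] measure_unif_Int_cells_union[OF X]
      cell_density_eq_inverse[OF p \<nu>] by simp
qed

lemma measure_Diff_cells_union_eq_0:
  assumes \<nu>: "\<nu> \<in> {\<nu>1, \<nu>2, unif K}" and X: "X \<in> sets borel"
  shows "measure \<nu> (X - cells_union) = 0"
proof -
  have U: "cells_union \<in> sets borel"
    using open_cells_union by simp
  have "(X - cells_union) \<inter> K \<in> null_sets lebesgue"
    using X U K_sets by (intro null_sets_subset[OF K_minus_cells_union_null]) auto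
  then have unif: "measure (unif K) (X - cells_union) = 0"
    using measure_unif[OF K_sets K_pos K_fin] X U by (simp add: measure_eq_0_null_sets)
  moreover have "measure \<nu> (X - cells_union) = 0" if \<nu>': "\<nu> \<in> {\<nu>1, \<nu>2}"
  proof -
    interpret prob_space \<nu>
      using component(1)[OF \<nu>'] .
    have "measure \<nu> cells_union = 1"
      using measure_Int_cells_union_eq_unif[OF \<nu>', of UNIV] measure_unif_Int_cells_union[of UNIV]
        emeasure_cells_union measure_K_pos by (simp add: measure_def)
    then have "measure \<nu> (UNIV - cells_union) = 0"
      using U component(2)[OF \<nu>'] prob_compl[of cells_union] by (simp add: sets_eq_imp_space_eq)
    moreover have "measure \<nu> (X - cells_union) \<le> measure \<nu> (UNIV - cells_union)"
      using X U component(2)[OF \<nu>'] by (intro finite_measure_mono) auto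
    ultimately show ?thesis
      by (metis antisym measure_nonneg)
  qed
  ultimately show ?thesis
    using \<nu> by blast
qed

lemma component_eq_unif:
  assumes \<nu>: "\<nu> \<in> {\<nu>1, \<nu>2}"
  shows "\<nu> = unif K"
proof (rule measure_eqI)
  interpret prob_space \<nu>
    using component(1)[OF \<nu>] .
  interpret U: prob_space "unif K"
    using prob_space_unif[OF K_sets K_pos K_fin] .
  show "sets \<nu> = sets (unif K)"
    using component(2)[OF \<nu>] by simp
  fix X assume "X \<in> sets \<nu>"
  then have X: "X \<in> sets borel"
    using component(2)[OF \<nu>] by simp
  have "measure \<nu> (X - cells_union) = 0" "measure (unif K) (X - cells_union) = 0"
    using measure_Diff_cells_union_eq_0 \<nu> X by auto
  then have "measure \<nu> X = measure (unif K) X"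
    using finite_measure_Diff'[of X cells_union] U.finite_measure_Diff'[of X cells_union]
      measure_Int_cells_union_eq_unif[OF \<nu> X] X open_cells_union component(2)[OF \<nu>]
    by (simp add: Int_commute)
  then show "emeasure \<nu> X = emeasure (unif K) X"
    by (simp add: emeasure_eq_measure U.emeasure_eq_measure)
qed

end

theorem mainTheorem13:
  fixes Q K :: "'a::euclidean_space set"
  assumes "closed_orthant Q"
    and "K \<subseteq> Q"
    and "OU_set 0 K"
    and "K \<in> sets lebesgue"
    and "0 < emeasure lebesgue K" and "emeasure lebesgue K < \<infinity>"
  shows "extreme_meas (OU_dists 0) (unif K)"
proof -
  obtain s :: "'a \<Rightarrow> real" where s: "\<forall>i\<in>Basis. s i = 1 \<or> s i = -1"
    and Q: "Q = {x. \<forall>i\<in>Basis. 0 \<le> s i * (x \<bullet> i)}"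
    using assms(1) unfolding closed_orthant_def by blast
  have "\<nu>1 = unif K \<and> \<nu>2 = unif K"
    if \<nu>: "\<nu>1 \<in> OU_dists 0" "\<nu>2 \<in> OU_dists 0" and t: "0 < t" "t < 1"
      and mix: "unif K = mixture 2 (\<lambda>j. if j = 0 then t else 1 - t) (\<lambda>j. if j = 0 then \<nu>1 else \<nu>2)"
    for \<nu>1 \<nu>2 t
  proof -
    have "\<And>i. i \<in> Basis \<Longrightarrow> s i \<noteq> 0" "\<And>x. x \<in> K \<Longrightarrow> outward s x"
      using s assms(2) Q by (auto simp: outward_def)
    moreover have "\<And>A. A \<in> sets borel \<Longrightarrow>
        emeasure (unif K) A = ennreal t * emeasure \<nu>1 A + ennreal (1 - t) * emeasure \<nu>2 A"
      using mix emeasure_mixture_2 OU_dists_shift_decreasing(2) \<nu> by metis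
    ultimately have "OU_uniform_split s K \<nu>1 \<nu>2 t"
      using assms(3-6) OU_dists_shift_decreasing[OF \<nu>(1)] OU_dists_shift_decreasing[OF \<nu>(2)] t
      by (intro OU_uniform_split.intro)
    then show ?thesis
      using OU_uniform_split.component_eq_unif by blast
  qed
  then show ?thesis
    using unif_in_OU_dists[OF assms(3-6)] unfolding extreme_meas_def by blast
qed

end
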